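(* Let $\Gamma=(V,E)$ be a finite connected quiver, $k$ a field of characteristic $0$, $n\ge2$, and let $k^n\Gamma$ be the ideal of $k\Gamma$ generated by all paths of length $n$. Let $\mathscr{Q}$ be the set of residue classes of paths of length $\le n-1$ (a basis of $k\Gamma/k^n\Gamma$). Then every $D_{r,\overline{s}}$ with $r\in E$, $\overline{s}\in\mathscr{Q}$, $s\notin V$, $r\parallel\overline{s}$ vanishes on $k^n\Gamma$, and the set $\overline{\mathfrak{B}}_1\cup\overline{\mathfrak{B}}_2$ is a $k$-basis of the space $\mathrm{Diff}(k\Gamma/k^n\Gamma)$ of derivations of $k\Gamma/k^n\Gamma$, where $\overline{\mathfrak{B}}_1=\{\overline{D}_{\overline{s}}\mid\overline{s}\in\mathscr{Q},\ h(\overline{s})\neq t(\overline{s})\}$ and $\overline{\mathfrak{B}}_2=\{\overline{D}_{r,\overline{s}}\mid r\in E,\ \overline{s}\in\mathscr{Q},\ s\notin V,\ r\parallel\overline{s}\}$.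
   Context: For a path $p$, $t(p),h(p)$ are its start and end vertex (vertices are paths of length $0$); paths multiply by left-to-right concatenation (product $0$ if they do not concatenate). $\overline{x}=x+k^n\Gamma$. For $\overline{s}\in\mathscr{Q}$ the class of a path $s$ of length $\le n-1$, $t(\overline{s})=t(s)$, $h(\overline{s})=h(s)$; $r\parallel\overline{s}$ means $t(r)=t(s)$, $h(r)=h(s)$. $\overline{D}_{\overline{s}}$ is the inner derivation $y\mapsto\overline{s}y-y\overline{s}$. $D_{r,\overline{s}}$ is the unique $k$-linear map $k\Gamma\to k\Gamma/k^n\Gamma$ with $D(xy)=D(x)\overline{y}+\overline{x}D(y)$, $D_{r,\overline{s}}(r)=\overline{s}$ and vanishing on all other arrows and vertices; when it vanishes on $k^n\Gamma$, $\overline{D}_{r,\overline{s}}$ is the induced derivation $\overline{x}\mapsto D_{r,\overline{s}}(x)$ of $k\Gamma/k^n\Gamma$. *)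

theory Defs
  imports Main "HOL-Library.FuncSet"
begin

record ('v,'e) quiver =
  verts :: "'v set"
  arcs  :: "'e set"
  qsrc  :: "'e \<Rightarrow> 'v"
  qtgt  :: "'e \<Rightarrow> 'v"

definition finite_quiver :: "('v,'e) quiver \<Rightarrow> bool" where
  "finite_quiver G \<longleftrightarrow> finite (verts G) \<and> finite (arcs G) \<and>
     (\<forall>a\<in>arcs G. qsrc G a \<in> verts G \<and> qtgt G a \<in> verts G)"

definition connected_quiver :: "('v,'e) quiver \<Rightarrow> bool" where
  "connected_quiver G \<longleftrightarrow> verts G \<noteq> {} \<and>
     (\<forall>u\<in>verts G. \<forall>v\<in>verts G.
        (u, v) \<in> ({(qsrc G a, qtgt G a) | a. a \<in> arcs G} \<union> {(qtgt G a, qsrc G a) | a. a \<in> arcs G})\<^sup>*)"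

text \<open>A path is a start vertex together with a (possibly empty) list of composable arrows,
  read left to right.  The path (v, []) is the vertex v (path of length 0).\<close>
type_synonym ('v,'e) path = "'v \<times> 'e list"

fun chain :: "('v,'e) quiver \<Rightarrow> 'v \<Rightarrow> 'e list \<Rightarrow> bool" where
  "chain G v [] = True"
| "chain G v (a # as) = (qsrc G a = v \<and> chain G (qtgt G a) as)"

definition is_path :: "('v,'e) quiver \<Rightarrow> ('v,'e) path \<Rightarrow> bool" where
  "is_path G p \<longleftrightarrow> fst p \<in> verts G \<and> set (snd p) \<subseteq> arcs G \<and> chain G (fst p) (snd p)"

definition pstart :: "('v,'e) path \<Rightarrow> 'v" where
  "pstart p = fst p"

definition pend :: "('v,'e) quiver \<Rightarrow> ('v,'e) path \<Rightarrow> 'v" where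
  "pend G p = (if snd p = [] then fst p else qtgt G (last (snd p)))"

definition plen :: "('v,'e) path \<Rightarrow> nat" where
  "plen p = length (snd p)"

definition vpath :: "'v \<Rightarrow> ('v,'e) path" where
  "vpath v = (v, [])"

definition apath :: "('v,'e) quiver \<Rightarrow> 'e \<Rightarrow> ('v,'e) path" where
  "apath G a = (qsrc G a, [a])"

definition pjoin :: "('v,'e) path \<Rightarrow> ('v,'e) path \<Rightarrow> ('v,'e) path" where
  "pjoin p q = (fst p, snd p @ snd q)"

definition parallel :: "('v,'e) quiver \<Rightarrow> 'e \<Rightarrow> ('v,'e) path \<Rightarrow> bool" where
  "parallel G r s \<longleftrightarrow> qsrc G r = pstart s \<and> qtgt G r = pend G s"

text \<open>Elements of k\<Gamma>: finitely supported k-valued functions on paths.\<close>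
definition supp :: "('a \<Rightarrow> 'k::zero) \<Rightarrow> 'a set" where
  "supp f = {p. f p \<noteq> 0}"

definition PA :: "('v,'e) quiver \<Rightarrow> (('v,'e) path \<Rightarrow> 'k::field) set" where
  "PA G = {f. finite (supp f) \<and> supp f \<subseteq> {p. is_path G p}}"

definition bas :: "('v,'e) path \<Rightarrow> (('v,'e) path \<Rightarrow> 'k::field)" where
  "bas p = (\<lambda>q. if q = p then 1 else 0)"

definition pmul :: "('v,'e) quiver \<Rightarrow> (('v,'e) path \<Rightarrow> 'k::field) \<Rightarrow> (('v,'e) path \<Rightarrow> 'k)
                     \<Rightarrow> (('v,'e) path \<Rightarrow> 'k)" where
  "pmul G f g = (\<lambda>p. \<Sum>(q, r) \<in> supp f \<times> supp g.
                     if pend G q = fst r \<and> pjoin q r = p then f q * g r else 0)"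

inductive_set knG :: "('v,'e) quiver \<Rightarrow> nat \<Rightarrow> (('v,'e) path \<Rightarrow> 'k::field) set"
  for G :: "('v,'e) quiver" and n :: nat where
  gen: "is_path G p \<Longrightarrow> plen p = n \<Longrightarrow> bas p \<in> knG G n"
| zero: "(\<lambda>_. 0) \<in> knG G n"
| add: "x \<in> knG G n \<Longrightarrow> y \<in> knG G n \<Longrightarrow> (\<lambda>p. x p + y p) \<in> knG G n"
| smul: "x \<in> knG G n \<Longrightarrow> (\<lambda>p. c * x p) \<in> knG G n"
| lmul: "a \<in> PA G \<Longrightarrow> x \<in> knG G n \<Longrightarrow> pmul G a x \<in> knG G n"
| rmul: "a \<in> PA G \<Longrightarrow> x \<in> knG G n \<Longrightarrow> pmul G x a \<in> knG G n"

definition coset :: "('v,'e) quiver \<Rightarrow> nat \<Rightarrow> (('v,'e) path \<Rightarrow> 'k::field) \<Rightarrow> (('v,'e) path \<Rightarrow> 'k) set" where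
  "coset G n x = {y \<in> PA G. (\<lambda>p. x p - y p) \<in> knG G n}"

definition QA :: "('v,'e) quiver \<Rightarrow> nat \<Rightarrow> (('v,'e) path \<Rightarrow> 'k::field) set set" where
  "QA G n = coset G n ` PA G"

definition rep :: "'a set \<Rightarrow> 'a" where
  "rep X = (SOME x. x \<in> X)"

definition qzero :: "('v,'e) quiver \<Rightarrow> nat \<Rightarrow> (('v,'e) path \<Rightarrow> 'k::field) set" where
  "qzero G n = coset G n (\<lambda>_. 0)"

definition qadd :: "('v,'e) quiver \<Rightarrow> nat \<Rightarrow> (('v,'e) path \<Rightarrow> 'k::field) set
                    \<Rightarrow> (('v,'e) path \<Rightarrow> 'k) set \<Rightarrow> (('v,'e) path \<Rightarrow> 'k) set" where
  "qadd G n X Y = coset G n (\<lambda>p. rep X p + rep Y p)"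

definition qsmul :: "('v,'e) quiver \<Rightarrow> nat \<Rightarrow> 'k::field
                     \<Rightarrow> (('v,'e) path \<Rightarrow> 'k) set \<Rightarrow> (('v,'e) path \<Rightarrow> 'k) set" where
  "qsmul G n c X = coset G n (\<lambda>p. c * rep X p)"

definition qmul :: "('v,'e) quiver \<Rightarrow> nat \<Rightarrow> (('v,'e) path \<Rightarrow> 'k::field) set
                    \<Rightarrow> (('v,'e) path \<Rightarrow> 'k) set \<Rightarrow> (('v,'e) path \<Rightarrow> 'k) set" where
  "qmul G n X Y = coset G n (pmul G (rep X) (rep Y))"

definition qsum :: "('v,'e) quiver \<Rightarrow> nat \<Rightarrow> 'i set \<Rightarrow> ('i \<Rightarrow> (('v,'e) path \<Rightarrow> 'k::field) set)
                    \<Rightarrow> (('v,'e) path \<Rightarrow> 'k) set" where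
  "qsum G n S F = coset G n (\<lambda>p. \<Sum>i\<in>S. rep (F i) p)"

type_synonym ('v,'e,'k) qelem = "(('v,'e) path \<Rightarrow> 'k) set"

definition Diff :: "('v,'e) quiver \<Rightarrow> nat
                    \<Rightarrow> (('v,'e,'k::field) qelem \<Rightarrow> ('v,'e,'k) qelem) set" where
  "Diff G n = {\<delta>. \<delta> \<in> extensional (QA G n) \<and>
      (\<forall>X\<in>QA G n. \<delta> X \<in> QA G n) \<and>
      (\<forall>X\<in>QA G n. \<forall>Y\<in>QA G n. \<delta> (qadd G n X Y) = qadd G n (\<delta> X) (\<delta> Y)) \<and>
      (\<forall>c. \<forall>X\<in>QA G n. \<delta> (qsmul G n c X) = qsmul G n c (\<delta> X)) \<and>
      (\<forall>X\<in>QA G n. \<forall>Y\<in>QA G n.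
          \<delta> (qmul G n X Y) = qadd G n (qmul G n (\<delta> X) Y) (qmul G n X (\<delta> Y)))}"

definition Dinner :: "('v,'e) quiver \<Rightarrow> nat \<Rightarrow> ('v,'e,'k::field) qelem
                      \<Rightarrow> (('v,'e,'k) qelem \<Rightarrow> ('v,'e,'k) qelem)" where
  "Dinner G n S = restrict
     (\<lambda>Y. qadd G n (qmul G n S Y) (qsmul G n (-1) (qmul G n Y S))) (QA G n)"

definition isDrs :: "('v,'e) quiver \<Rightarrow> nat \<Rightarrow> 'e \<Rightarrow> ('v,'e) path
                     \<Rightarrow> ((('v,'e) path \<Rightarrow> 'k::field) \<Rightarrow> ('v,'e,'k) qelem) \<Rightarrow> bool" where
  "isDrs G n r s D \<longleftrightarrow> D \<in> extensional (PA G) \<and>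
      (\<forall>x\<in>PA G. D x \<in> QA G n) \<and>
      (\<forall>x\<in>PA G. \<forall>y\<in>PA G. D (\<lambda>p. x p + y p) = qadd G n (D x) (D y)) \<and>
      (\<forall>c. \<forall>x\<in>PA G. D (\<lambda>p. c * x p) = qsmul G n c (D x)) \<and>
      (\<forall>x\<in>PA G. \<forall>y\<in>PA G.
          D (pmul G x y) = qadd G n (qmul G n (D x) (coset G n y)) (qmul G n (coset G n x) (D y))) \<and>
      D (bas (apath G r)) = coset G n (bas s) \<and>
      (\<forall>a\<in>arcs G. a \<noteq> r \<longrightarrow> D (bas (apath G a)) = qzero G n) \<and>
      (\<forall>v\<in>verts G. D (bas (vpath v)) = qzero G n)"

definition Drs :: "('v,'e) quiver \<Rightarrow> nat \<Rightarrow> 'e \<Rightarrow> ('v,'e) path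
                   \<Rightarrow> (('v,'e) path \<Rightarrow> 'k::field) \<Rightarrow> ('v,'e,'k) qelem" where
  "Drs G n r s = (THE D. isDrs G n r s D)"

definition Drs_bar :: "('v,'e) quiver \<Rightarrow> nat \<Rightarrow> 'e \<Rightarrow> ('v,'e) path
                   \<Rightarrow> ('v,'e,'k::field) qelem \<Rightarrow> ('v,'e,'k) qelem" where
  "Drs_bar G n r s = restrict (\<lambda>X. Drs G n r s (rep X)) (QA G n)"

definition B1 :: "('v,'e) quiver \<Rightarrow> nat \<Rightarrow> (('v,'e,'k::field) qelem \<Rightarrow> ('v,'e,'k) qelem) set" where
  "B1 G n = {Dinner G n (coset G n (bas s)) | s.
               is_path G s \<and> plen s \<le> n - 1 \<and> pend G s \<noteq> pstart s}"

definition B2 :: "('v,'e) quiver \<Rightarrow> nat \<Rightarrow> (('v,'e,'k::field) qelem \<Rightarrow> ('v,'e,'k) qelem) set" where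
  "B2 G n = {Drs_bar G n r s | r s.
               r \<in> arcs G \<and> is_path G s \<and> plen s \<le> n - 1 \<and> 1 \<le> plen s \<and> parallel G r s}"

definition is_Diff_basis :: "('v,'e) quiver \<Rightarrow> nat
                       \<Rightarrow> (('v,'e,'k::field) qelem \<Rightarrow> ('v,'e,'k) qelem) set \<Rightarrow> bool" where
  "is_Diff_basis G n B \<longleftrightarrow> B \<subseteq> Diff G n \<and>
     (\<forall>\<delta>\<in>Diff G n. \<exists>S c. finite S \<and> S \<subseteq> B \<and>
         (\<forall>X\<in>QA G n. \<delta> X = qsum G n S (\<lambda>D. qsmul G n (c D) (D X)))) \<and>
     (\<forall>S c. finite S \<and> S \<subseteq> B \<and>
         (\<forall>X\<in>QA G n. qsum G n S (\<lambda>D. qsmul G n (c D) (D X)) = qzero G n)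
         \<longrightarrow> (\<forall>D\<in>S. c D = 0))"

end

theory Submission
  imports Defs
begin

text \<open>Elements of k\<Gamma>/k^n\<Gamma> are represented by their truncations to paths of length < n, so a
  derivation of the quotient becomes a map d on k\<Gamma> obeying Leibniz' rule up to truncation; such a d
  is determined by its values on vertices and arrows. The relations e_w e_w = e_w and e_v e_w = 0
  force d(e_w) to be a combination of non-closed paths s with h(s) = w or t(s) = w, with opposite
  signs, so subtracting the inner derivations by these s makes d vanish on vertices. Then d(a) is
  supported on paths parallel to a, and a path of length 0 can only occur for a loop a at a vertex v,
  where n \<cdot> d(a)(e_v) is the coefficient of a^(n-1) in d(a^n) = 0; in characteristic 0 subtracting
  the D_{a,s} therefore kills d. Linear independence follows by evaluating at the vertices e_{h(s)},
  where every D_{r,s} vanishes, and then at the arrows r, where only D_{r,s} has coefficient 1 at s.\<close>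

lemma chain_append: "chain G v (l1 @ l2) \<longleftrightarrow> chain G v l1 \<and> chain G (pend G (v,l1)) l2"
  by (induction l1 arbitrary: v) (auto simp: pend_def)

lemma pend_pjoin: "pend G p = fst q \<Longrightarrow> pend G (pjoin p q) = pend G q"
  by (cases p, cases q) (auto simp: pjoin_def pend_def)

lemma pend_Cons: "pend G (v, a # l) = pend G (qtgt G a, l)"
  by (simp add: pend_def)

lemma fst_pjoin[simp]: "fst (pjoin p q) = fst p" by (simp add: pjoin_def)
lemma snd_pjoin[simp]: "snd (pjoin p q) = snd p @ snd q" by (simp add: pjoin_def)
lemma plen_pjoin[simp]: "plen (pjoin p q) = plen p + plen q" by (simp add: pjoin_def plen_def)
lemma pjoin_assoc: "pjoin (pjoin p q) r = pjoin p (pjoin q r)" by (simp add: pjoin_def)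

lemma is_path_pjoin:
  "is_path G p \<Longrightarrow> is_path G q \<Longrightarrow> pend G p = fst q \<Longrightarrow> is_path G (pjoin p q)"
  by (cases p, cases q) (auto simp: is_path_def pjoin_def chain_append)

lemma is_path_split:
  assumes "is_path G (v, l1 @ l2)" and "finite_quiver G"
  shows "is_path G (v, l1)" "is_path G (pend G (v,l1), l2)"
proof -
  have a: "v \<in> verts G" "set l1 \<subseteq> arcs G" "set l2 \<subseteq> arcs G" "chain G v l1"
    "chain G (pend G (v,l1)) l2"
    using assms(1) by (auto simp: is_path_def chain_append)
  show "is_path G (v, l1)" using a by (simp add: is_path_def)
  have "pend G (v,l1) \<in> verts G"
    using a assms(2) by (auto simp: pend_def finite_quiver_def dest!: last_in_set)
  then show "is_path G (pend G (v,l1), l2)" using a by (simp add: is_path_def)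
qed

lemma pend_verts: "finite_quiver G \<Longrightarrow> is_path G q \<Longrightarrow> pend G q \<in> verts G"
  by (cases q) (auto simp: pend_def is_path_def finite_quiver_def dest!: last_in_set)

lemma is_path_Cons:
  assumes "finite_quiver G" "is_path G (v, a # l)"
  shows "is_path G (qtgt G a, l)" "a \<in> arcs G" "qsrc G a = v" "v \<in> verts G"
  using is_path_split(2)[of G v "[a]" l] assms by (auto simp: pend_def is_path_def)

lemma apath_is_path: "finite_quiver G \<Longrightarrow> a \<in> arcs G \<Longrightarrow> is_path G (apath G a)"
  by (simp add: apath_def is_path_def finite_quiver_def)

lemma finite_paths_shorter:
  assumes "finite_quiver G"
  shows "finite {p. is_path G p \<and> plen p < m}"
proof -
  have "{p. is_path G p \<and> plen p < m} \<subseteq> verts G \<times> {l. set l \<subseteq> arcs G \<and> length l \<le> m}"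
    by (auto simp: is_path_def plen_def)
  moreover have "finite (verts G \<times> {l. set l \<subseteq> arcs G \<and> length l \<le> m})"
    using assms by (auto simp: finite_quiver_def intro: finite_lists_length_le)
  ultimately show ?thesis by (rule finite_subset)
qed

lemma supp_bas[simp]: "supp (bas p :: _ \<Rightarrow> 'k::field) = {p}"
  by (auto simp: supp_def bas_def)

lemma bas_PA: "is_path G p \<Longrightarrow> (bas p :: _ \<Rightarrow> 'k::field) \<in> PA G"
  by (simp add: PA_def)

lemma zero_PA[simp]: "(\<lambda>_. 0) \<in> PA G" by (simp add: PA_def supp_def)

lemma supp_add: "supp (\<lambda>p. x p + y p) \<subseteq> supp x \<union> supp (y::_\<Rightarrow>'k::field)"
  by (auto simp: supp_def)

lemma supp_smul: "supp (\<lambda>p. c * x p) \<subseteq> supp (x::_\<Rightarrow>'k::field)"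
  by (auto simp: supp_def)

lemma supp_sum: "supp (\<lambda>p. \<Sum>i\<in>I. F i p) \<subseteq> (\<Union>i\<in>I. supp (F i :: _\<Rightarrow>'k::field))"
  by (auto simp: supp_def dest: sum.not_neutral_contains_not_neutral)

lemma finite_supp_sum: "finite I \<Longrightarrow> (\<And>i. i \<in> I \<Longrightarrow> finite (supp (F i :: _ \<Rightarrow> 'k::field))) \<Longrightarrow>
   finite (supp (\<lambda>p. \<Sum>i\<in>I. F i p))"
  by (rule finite_subset[OF supp_sum]) auto

lemma finite_supp_smul: "finite (supp (F :: _ \<Rightarrow> 'k::field)) \<Longrightarrow> finite (supp (\<lambda>p. c * F p))"
  by (rule finite_subset[OF supp_smul])

lemma finite_supp_lin: "finite I \<Longrightarrow> (\<And>i. i \<in> I \<Longrightarrow> finite (supp (F i :: _ \<Rightarrow> 'k::field))) \<Longrightarrow>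
   finite (supp (\<lambda>p. \<Sum>i\<in>I. c i * F i p))"
  by (rule finite_supp_sum) (auto intro: finite_supp_smul)

lemma add_PA: "x \<in> PA G \<Longrightarrow> y \<in> PA G \<Longrightarrow> (\<lambda>p. x p + y p) \<in> PA G"
  unfolding PA_def using supp_add[of x y] by (auto intro: finite_subset)

lemma smul_PA: "x \<in> PA G \<Longrightarrow> (\<lambda>p. c * x p) \<in> PA G"
  unfolding PA_def using supp_smul[of c x] by (auto intro: finite_subset)

lemma diff_PA: "x \<in> PA G \<Longrightarrow> y \<in> PA G \<Longrightarrow> (\<lambda>p. x p - y p) \<in> PA G"
proof -
  assume "x \<in> PA G" "y \<in> PA G"
  then have "(\<lambda>p. x p + (-1) * y p) \<in> PA G" by (intro add_PA smul_PA)
  then show ?thesis by simp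
qed

lemma sum_PA: "finite I \<Longrightarrow> (\<And>i. i \<in> I \<Longrightarrow> F i \<in> PA G) \<Longrightarrow> (\<lambda>p. \<Sum>i\<in>I. F i p) \<in> PA G"
  by (induction I rule: finite_induct) (auto intro: add_PA)

lemma PA_finite: "x \<in> PA G \<Longrightarrow> finite (supp x)" by (simp add: PA_def)
lemma PA_path: "x \<in> PA G \<Longrightarrow> x p \<noteq> 0 \<Longrightarrow> is_path G p"
  by (auto simp: PA_def supp_def)

lemma bas_expansion:
  assumes "finite A" "supp f \<subseteq> A"
  shows "f = (\<lambda>p. \<Sum>q\<in>A. f q * bas q p)"
proof
  fix p
  have "(\<Sum>q\<in>A. f q * bas q p) = (\<Sum>q\<in>A. if q = p then f p else 0)"
    by (rule sum.cong) (auto simp: bas_def)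
  also have "\<dots> = f p" using assms by (auto simp: supp_def)
  finally show "f p = (\<Sum>q\<in>A. f q * bas q p)" by simp
qed

lemma PA_induct[consumes 1, case_names zero bas add]:
  fixes x :: "_ \<Rightarrow> 'k::field"
  assumes x: "x \<in> PA G"
    and zero: "P (\<lambda>_. 0)"
    and bas: "\<And>c p. is_path G p \<Longrightarrow> P (\<lambda>q. c * bas p q)"
    and add: "\<And>y z. y \<in> PA G \<Longrightarrow> z \<in> PA G \<Longrightarrow> P y \<Longrightarrow> P z \<Longrightarrow> P (\<lambda>p. y p + z p)"
  shows "P x"
proof -
  have "P (\<lambda>p. \<Sum>q\<in>A. x q * bas q p)" if "finite A" "A \<subseteq> supp x" for A
    using that
  proof (induction A rule: finite_induct)
    case empty then show ?case using zero by simp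
  next
    case (insert a A)
    have paths: "\<And>q. q \<in> insert a A \<Longrightarrow> is_path G q" using insert(4) x by (auto simp: PA_def)
    have "(\<lambda>p. x a * bas a p) \<in> PA G" by (intro smul_PA bas_PA paths) simp
    moreover have "(\<lambda>p. \<Sum>q\<in>A. x q * bas q p) \<in> PA G"
      using insert(1) by (intro sum_PA smul_PA bas_PA paths) simp_all
    ultimately show ?case using add bas[OF paths] insert by simp
  qed
  note partial = this
  have eq: "x = (\<lambda>p. \<Sum>q\<in>supp x. x q * bas q p)"
    using x by (intro bas_expansion) (simp_all add: PA_def)
  show ?thesis by (rule ssubst[OF eq], rule partial[OF PA_finite[OF x] order_refl])
qed

lemma pmul_eq_sum_over:
  fixes f g :: "_ \<Rightarrow> 'k::field"
  assumes "finite A" "finite B" "supp f \<subseteq> A" "supp g \<subseteq> B"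
  shows "pmul G f g p = (\<Sum>(q, r)\<in>A \<times> B. if pend G q = fst r \<and> pjoin q r = p then f q * g r else 0)"
  unfolding pmul_def
  by (rule sum.mono_neutral_left) (use assms in \<open>auto simp: supp_def split: if_splits\<close>)

lemma supp_pmul: "supp (pmul G f (g::_\<Rightarrow>'k::field)) \<subseteq> (\<lambda>(q,r). pjoin q r) ` (supp f \<times> supp g)"
proof
  fix p assume "p \<in> supp (pmul G f g)"
  then have "pmul G f g p \<noteq> 0" by (simp add: supp_def)
  then obtain qr where "qr \<in> supp f \<times> supp g"
    "(\<lambda>(q,r). if pend G q = fst r \<and> pjoin q r = p then f q * g r else 0) qr \<noteq> 0"
    unfolding pmul_def by (rule sum.not_neutral_contains_not_neutral)
  then obtain q r where "(q,r) \<in> supp f \<times> supp g"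
    "(if pend G q = fst r \<and> pjoin q r = p then f q * g r else 0) \<noteq> 0"
    by (cases qr) auto
  then show "p \<in> (\<lambda>(q,r). pjoin q r) ` (supp f \<times> supp g)"
    by (auto split: if_splits)
qed

lemma pmul_nonzero_factors:
  fixes f g :: "_ \<Rightarrow> 'k::field"
  assumes "pmul G f g p \<noteq> 0"
  shows "\<exists>q r. f q \<noteq> 0 \<and> g r \<noteq> 0 \<and> pend G q = fst r \<and> pjoin q r = p"
proof -
  obtain qr where "qr \<in> supp f \<times> supp g"
    "(\<lambda>(q,r). if pend G q = fst r \<and> pjoin q r = p then f q * g r else 0) qr \<noteq> 0"
    using assms unfolding pmul_def by (rule sum.not_neutral_contains_not_neutral)
  then obtain q r where "(q,r) \<in> supp f \<times> supp g"
    "(if pend G q = fst r \<and> pjoin q r = p then f q * g r else 0) \<noteq> 0"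
    by (cases qr) auto
  then have "f q \<noteq> 0" "g r \<noteq> 0" "pend G q = fst r" "pjoin q r = p"
    by (auto simp: supp_def split: if_splits)
  then show ?thesis by blast
qed

lemma finite_supp_pmul: "finite (supp (f::_\<Rightarrow>'k::field)) \<Longrightarrow> finite (supp g) \<Longrightarrow> finite (supp (pmul G f g))"
  by (rule finite_subset[OF supp_pmul]) auto

lemma pmul_PA: "x \<in> PA G \<Longrightarrow> y \<in> PA G \<Longrightarrow> pmul G x y \<in> PA G"
proof -
  assume a: "x \<in> PA G" "y \<in> PA G"
  have "finite (supp (pmul G x y))" using a by (intro finite_supp_pmul) (auto simp: PA_def)
  moreover have "supp (pmul G x y) \<subseteq> {p. is_path G p}"
  proof
    fix p assume "p \<in> supp (pmul G x y)"
    then obtain q r where "x q \<noteq> 0" "y r \<noteq> 0" "pend G q = fst r" "pjoin q r = p"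
      using pmul_nonzero_factors[of G x y p] by (auto simp: supp_def)
    then show "p \<in> {p. is_path G p}" using a by (auto intro: is_path_pjoin PA_path)
  qed
  ultimately show ?thesis by (simp add: PA_def)
qed

lemma pmul_bas_bas:
  "pmul G (bas a) (bas b) = (if pend G a = fst b then bas (pjoin a b) else (\<lambda>_. (0::'k::field)))"
  unfolding pmul_def supp_bas by (auto simp: bas_def)

lemma pmul_zero_left[simp]: "pmul G (\<lambda>_. 0) g = (\<lambda>_. 0)"
  by (simp add: pmul_def supp_def)
lemma pmul_zero_right[simp]: "pmul G f (\<lambda>_. 0) = (\<lambda>_. 0)"
  by (simp add: pmul_def supp_def)

lemma pmul_sum_left:
  assumes "finite I" "\<And>i. i \<in> I \<Longrightarrow> finite (supp (F i))" "finite (supp g)"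
  shows "pmul G (\<lambda>p. \<Sum>i\<in>I. F i p) g = (\<lambda>p. \<Sum>i\<in>I. pmul G (F i) g p)"
proof
  fix p
  let ?A = "\<Union>i\<in>I. supp (F i)"
  have fA: "finite ?A" using assms by auto
  have "pmul G (\<lambda>p. \<Sum>i\<in>I. F i p) g p =
     (\<Sum>(q, r)\<in>?A \<times> supp g. if pend G q = fst r \<and> pjoin q r = p then (\<Sum>i\<in>I. F i q) * g r else 0)"
    by (rule pmul_eq_sum_over) (use fA assms supp_sum[of F I] in auto)
  also have "\<dots> = (\<Sum>(q, r)\<in>?A \<times> supp g. \<Sum>i\<in>I. if pend G q = fst r \<and> pjoin q r = p then F i q * g r else 0)"
    by (rule sum.cong) (auto simp: sum_distrib_right)
  also have "\<dots> = (\<Sum>i\<in>I. \<Sum>(q, r)\<in>?A \<times> supp g. if pend G q = fst r \<and> pjoin q r = p then F i q * g r else 0)"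
    by (subst sum.swap) (simp add: case_prod_beta)
  also have "\<dots> = (\<Sum>i\<in>I. pmul G (F i) g p)"
    by (rule sum.cong[OF refl], rule pmul_eq_sum_over[symmetric]) (use fA assms in auto)
  finally show "pmul G (\<lambda>p. \<Sum>i\<in>I. F i p) g p = (\<Sum>i\<in>I. pmul G (F i) g p)" .
qed

lemma pmul_sum_right:
  assumes "finite I" "\<And>i. i \<in> I \<Longrightarrow> finite (supp (F i))" "finite (supp f)"
  shows "pmul G f (\<lambda>p. \<Sum>i\<in>I. F i p) = (\<lambda>p. \<Sum>i\<in>I. pmul G f (F i) p)"
proof
  fix p
  let ?A = "\<Union>i\<in>I. supp (F i)"
  have fA: "finite ?A" using assms by auto
  have "pmul G f (\<lambda>p. \<Sum>i\<in>I. F i p) p =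
     (\<Sum>(q, r)\<in>supp f \<times> ?A. if pend G q = fst r \<and> pjoin q r = p then f q * (\<Sum>i\<in>I. F i r) else 0)"
    by (rule pmul_eq_sum_over) (use fA assms supp_sum[of F I] in auto)
  also have "\<dots> = (\<Sum>(q, r)\<in>supp f \<times> ?A. \<Sum>i\<in>I. if pend G q = fst r \<and> pjoin q r = p then f q * F i r else 0)"
    by (rule sum.cong) (auto simp: sum_distrib_left)
  also have "\<dots> = (\<Sum>i\<in>I. \<Sum>(q, r)\<in>supp f \<times> ?A. if pend G q = fst r \<and> pjoin q r = p then f q * F i r else 0)"
    by (subst sum.swap) (simp add: case_prod_beta)
  also have "\<dots> = (\<Sum>i\<in>I. pmul G f (F i) p)"
    by (rule sum.cong[OF refl], rule pmul_eq_sum_over[symmetric]) (use fA assms in auto)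
  finally show "pmul G f (\<lambda>p. \<Sum>i\<in>I. F i p) p = (\<Sum>i\<in>I. pmul G f (F i) p)" .
qed

lemma pmul_smul_left: fixes f :: "_ \<Rightarrow> 'k::field" shows "pmul G (\<lambda>p. c * f p) g = (\<lambda>p. c * pmul G f g p)"
proof (cases "c = 0")
  case True then show ?thesis by simp
next
  case False
  then have "supp (\<lambda>p. c * f p) = supp f" by (auto simp: supp_def)
  then show ?thesis unfolding pmul_def
    by (auto simp: sum_distrib_left intro!: sum.cong)
qed

lemma pmul_smul_right: fixes g :: "_ \<Rightarrow> 'k::field" shows "pmul G f (\<lambda>p. c * g p) = (\<lambda>p. c * pmul G f g p)"
proof (cases "c = 0")
  case True then show ?thesis by simp
next
  case False
  then have "supp (\<lambda>p. c * g p) = supp g" by (auto simp: supp_def)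
  then show ?thesis unfolding pmul_def
    by (auto simp: sum_distrib_left intro!: sum.cong)
qed

lemma pmul_add_left:
  assumes "finite (supp x)" "finite (supp y)" "finite (supp g)"
  shows "pmul G (\<lambda>p. x p + y p) g = (\<lambda>p. pmul G x g p + pmul G y g p)"
  using pmul_sum_left[of "{True, False}" "\<lambda>b. if b then x else y" g G] assms by simp

lemma pmul_add_right:
  assumes "finite (supp x)" "finite (supp y)" "finite (supp f)"
  shows "pmul G f (\<lambda>p. x p + y p) = (\<lambda>p. pmul G f x p + pmul G f y p)"
  using pmul_sum_right[of "{True, False}" "\<lambda>b. if b then x else y" f G] assms by simp

lemma pmul_diff_left:
  fixes x y g :: "_ \<Rightarrow> 'k::field"
  assumes "finite (supp x)" "finite (supp y)" "finite (supp g)"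
  shows "pmul G (\<lambda>p. x p - y p) g = (\<lambda>p. pmul G x g p - pmul G y g p)"
proof -
  have "pmul G (\<lambda>p. x p - y p) g = pmul G (\<lambda>p. x p + (\<lambda>p. (-1) * y p) p) g" by simp
  also have "\<dots> = (\<lambda>p. pmul G x g p + pmul G (\<lambda>p. (-1) * y p) g p)"
    by (rule pmul_add_left) (use assms finite_supp_smul[of y "-1"] in auto)
  finally show ?thesis by (simp add: pmul_smul_left[of G "-1" y g, simplified])
qed

lemma pmul_diff_right:
  fixes x y g :: "_ \<Rightarrow> 'k::field"
  assumes "finite (supp x)" "finite (supp y)" "finite (supp g)"
  shows "pmul G g (\<lambda>p. x p - y p) = (\<lambda>p. pmul G g x p - pmul G g y p)"
proof -
  have "pmul G g (\<lambda>p. x p - y p) = pmul G g (\<lambda>p. x p + (\<lambda>p. (-1) * y p) p)" by simp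
  also have "\<dots> = (\<lambda>p. pmul G g x p + pmul G g (\<lambda>p. (-1) * y p) p)"
    by (rule pmul_add_right) (use assms finite_supp_smul[of y "-1"] in auto)
  finally show ?thesis by (simp add: pmul_smul_right[of G g "-1" y, simplified])
qed

lemma pmul_lin_left:
  fixes F :: "_ \<Rightarrow> _ \<Rightarrow> 'k::field"
  assumes "finite I" "\<And>i. i \<in> I \<Longrightarrow> finite (supp (F i))" "finite (supp g)"
  shows "pmul G (\<lambda>p. \<Sum>i\<in>I. c i * F i p) g = (\<lambda>p. \<Sum>i\<in>I. c i * pmul G (F i) g p)"
  by (subst pmul_sum_left) (use assms in \<open>auto intro: finite_supp_smul simp: pmul_smul_left\<close>)

lemma pmul_lin_right:
  fixes F :: "_ \<Rightarrow> _ \<Rightarrow> 'k::field"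
  assumes "finite I" "\<And>i. i \<in> I \<Longrightarrow> finite (supp (F i))" "finite (supp f)"
  shows "pmul G f (\<lambda>p. \<Sum>i\<in>I. c i * F i p) = (\<lambda>p. \<Sum>i\<in>I. c i * pmul G f (F i) p)"
  by (subst pmul_sum_right) (use assms in \<open>auto intro: finite_supp_smul simp: pmul_smul_right\<close>)

lemma pmul_expand_right:
  fixes x h :: "_ \<Rightarrow> 'k::field"
  assumes "finite C" "supp h \<subseteq> C" "finite (supp x)"
  shows "pmul G x h p = (\<Sum>w\<in>C. h w * pmul G x (bas w) p)"
proof -
  have "pmul G x h = pmul G x (\<lambda>p. \<Sum>w\<in>C. h w * bas w p)"
    using bas_expansion[OF assms(1,2)] by simp
  also have "\<dots> = (\<lambda>p. \<Sum>w\<in>C. h w * pmul G x (bas w) p)"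
    by (rule pmul_lin_right) (use assms in auto)
  finally show ?thesis by simp
qed

lemma pmul_expand_left:
  fixes x h :: "_ \<Rightarrow> 'k::field"
  assumes "finite C" "supp h \<subseteq> C" "finite (supp x)"
  shows "pmul G h x p = (\<Sum>w\<in>C. h w * pmul G (bas w) x p)"
proof -
  have "pmul G h x = pmul G (\<lambda>p. \<Sum>w\<in>C. h w * bas w p) x"
    using bas_expansion[OF assms(1,2)] by simp
  also have "\<dots> = (\<lambda>p. \<Sum>w\<in>C. h w * pmul G (bas w) x p)"
    by (rule pmul_lin_left) (use assms in auto)
  finally show ?thesis by simp
qed

lemma pmul_expand:
  fixes f g :: "_ \<Rightarrow> 'k::field"
  assumes "finite (supp f)" "finite (supp g)"
  shows "pmul G f g = (\<lambda>p. \<Sum>q\<in>supp f. f q * (\<Sum>r\<in>supp g. g r * pmul G (bas q) (bas r) p))"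
proof
  fix p
  show "pmul G f g p = (\<Sum>q\<in>supp f. f q * (\<Sum>r\<in>supp g. g r * pmul G (bas q) (bas r) p))"
    by (subst pmul_expand_left[where C="supp f"]) (use assms in \<open>auto intro!: sum.cong pmul_expand_right\<close>)
qed

lemma pmul_bas_assoc:
  "pmul G (pmul G (bas q) (bas r)) (bas w) = (pmul G (bas q) (pmul G (bas r) (bas w)) :: _ \<Rightarrow> 'k::field)"
  by (auto simp: pmul_bas_bas pend_pjoin pjoin_assoc)

lemma pmul_assoc:
  fixes f g h :: "_ \<Rightarrow> 'k::field"
  assumes f: "finite (supp f)" and g: "finite (supp g)" and h: "finite (supp h)"
  shows "pmul G (pmul G f g) h = pmul G f (pmul G g h)"
proof
  fix p
  have fin1: "\<And>q. finite (supp (\<lambda>p. \<Sum>r\<in>supp g. g r * pmul G (bas q) (bas r) p))"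
    using g by (intro finite_supp_lin finite_supp_pmul) auto
  have fin2: "\<And>r. finite (supp (\<lambda>p. \<Sum>w\<in>supp h. h w * pmul G (bas r) (bas w) p))"
    using h by (intro finite_supp_lin finite_supp_pmul) auto
  have "pmul G (pmul G f g) h p =
        pmul G (\<lambda>p. \<Sum>q\<in>supp f. f q * (\<Sum>r\<in>supp g. g r * pmul G (bas q) (bas r) p)) h p"
    using pmul_expand[OF f g] by simp
  also have "\<dots> = (\<Sum>q\<in>supp f. f q * pmul G (\<lambda>p. \<Sum>r\<in>supp g. g r * pmul G (bas q) (bas r) p) h p)"
    by (subst pmul_lin_left) (use f h fin1 in auto)
  also have "\<dots> = (\<Sum>q\<in>supp f. f q * (\<Sum>r\<in>supp g. g r * pmul G (pmul G (bas q) (bas r)) h p))"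
    by (subst pmul_lin_left) (use g h in \<open>auto intro: finite_supp_pmul\<close>)
  also have "\<dots> = (\<Sum>q\<in>supp f. f q * (\<Sum>r\<in>supp g. g r * (\<Sum>w\<in>supp h. h w *
                   pmul G (pmul G (bas q) (bas r)) (bas w) p)))"
    by (intro sum.cong refl arg_cong2[where f="(*)"] pmul_expand_right) (use h in \<open>auto intro: finite_supp_pmul\<close>)
  also have "\<dots> = (\<Sum>q\<in>supp f. f q * (\<Sum>r\<in>supp g. g r * (\<Sum>w\<in>supp h. h w *
                   pmul G (bas q) (pmul G (bas r) (bas w)) p)))"
    by (simp add: pmul_bas_assoc)
  also have "\<dots> = (\<Sum>q\<in>supp f. f q * (\<Sum>r\<in>supp g. g r * pmul G (bas q) (\<lambda>p. \<Sum>w\<in>supp h. h w * pmul G (bas r) (bas w) p) p))"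
    by (subst pmul_lin_right) (use h in \<open>auto intro: finite_supp_pmul\<close>)
  also have "\<dots> = (\<Sum>q\<in>supp f. f q * pmul G (bas q) (\<lambda>p. \<Sum>r\<in>supp g. g r * (\<Sum>w\<in>supp h. h w * pmul G (bas r) (bas w) p)) p)"
    by (subst pmul_lin_right) (use g fin2 in auto)
  also have "\<dots> = (\<Sum>q\<in>supp f. f q * pmul G (bas q) (pmul G g h) p)"
    using pmul_expand[OF g h] by simp
  also have "\<dots> = pmul G f (pmul G g h) p"
    by (rule pmul_expand_left[symmetric]) (use f g h in \<open>auto intro: finite_supp_pmul\<close>)
  finally show "pmul G (pmul G f g) h p = pmul G f (pmul G g h) p" .
qed

lemma pmul_bas_left_apply:
  fixes y :: "_ \<Rightarrow> 'k::field"
  assumes "finite (supp y)"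
  shows "pmul G (bas p) y (fst p, snd p @ l) = y (pend G p, l)"
proof -
  have "pmul G (bas p) y (fst p, snd p @ l) =
     (\<Sum>(q, r)\<in>{p} \<times> supp y. if pend G q = fst r \<and> pjoin q r = (fst p, snd p @ l) then bas p q * y r else 0)"
    by (rule pmul_eq_sum_over) (use assms in auto)
  also have "\<dots> = (\<Sum>r\<in>supp y. if r = (pend G p, l) then y r else 0)"
    by (simp add: sum.cartesian_product[symmetric] bas_def pjoin_def)
       (rule sum.cong, auto simp: bas_def)
  also have "\<dots> = y (pend G p, l)" using assms by (auto simp: supp_def)
  finally show ?thesis .
qed

lemma pmul_bas_right_apply:
  fixes x :: "_ \<Rightarrow> 'k::field"
  assumes "finite (supp x)"
  shows "pmul G x (bas p) (w, l @ snd p) = (if pend G (w,l) = fst p then x (w,l) else 0)"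
proof -
  have "pmul G x (bas p) (w, l @ snd p) =
     (\<Sum>(q, r)\<in>supp x \<times> {p}. if pend G q = fst r \<and> pjoin q r = (w, l @ snd p) then x q * bas p r else 0)"
    by (rule pmul_eq_sum_over) (use assms in auto)
  also have "\<dots> = (\<Sum>q\<in>supp x. if q = (w,l) \<and> pend G (w,l) = fst p then x q else 0)"
    by (simp add: sum.cartesian_product[symmetric] bas_def pjoin_def)
       (rule sum.cong, auto simp: bas_def)
  also have "\<dots> = (if pend G (w,l) = fst p then x (w,l) else 0)" using assms by (auto simp: supp_def)
  finally show ?thesis .
qed

lemma pmul_vert_idem_right:
  fixes x :: "_ \<Rightarrow> 'k::field"
  assumes "finite (supp x)"
  shows "pmul G x (bas (w, [])) q = (if pend G q = w then x q else 0)"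
  using pmul_bas_right_apply[OF assms, of G "(w,[])" "fst q" "snd q"] by simp

lemma pmul_vert_idem_left:
  fixes x :: "_ \<Rightarrow> 'k::field"
  assumes "finite (supp x)"
  shows "pmul G (bas (w, [])) x q = (if fst q = w then x q else 0)"
proof (cases "fst q = w")
  case True
  then show ?thesis using pmul_bas_left_apply[OF assms, of G "(w,[])" "snd q"] by (cases q) (simp add: pend_def)
next
  case False
  have "pmul G (bas (w, [])) x q = 0"
  proof (rule ccontr)
    assume "pmul G (bas (w, [])) x q \<noteq> 0"
    then obtain a b where "bas (w,[]) a \<noteq> (0::'k)" "pjoin a b = q" using pmul_nonzero_factors by blast
    then show False using False by (auto simp: bas_def split: if_splits)
  qed
  then show ?thesis using False by simp
qed

abbreviation vert_idem :: "'v \<Rightarrow> (('v,'e) path \<Rightarrow> 'k::field)" where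
  "vert_idem w \<equiv> bas (w, [])"

lemma vert_idem_PA: "w \<in> verts G \<Longrightarrow> (vert_idem w :: _ \<Rightarrow> 'k::field) \<in> PA G"
  by (rule bas_PA) (simp add: is_path_def)

lemma vert_idem_mult_self: "pmul G (vert_idem w) (vert_idem w) = (vert_idem w :: _ \<Rightarrow> 'k::field)"
  by (simp add: pmul_bas_bas pend_def pjoin_def)

lemma vert_idem_mult_other: "v \<noteq> w \<Longrightarrow> pmul G (vert_idem v) (vert_idem w) = (\<lambda>_. 0 :: 'k::field)"
  by (simp add: pmul_bas_bas pend_def)

section \<open>Truncation and the ideal\<close>

definition trunc :: "nat \<Rightarrow> (('v,'e) path \<Rightarrow> 'k::field) \<Rightarrow> ('v,'e) path \<Rightarrow> 'k" where
  "trunc n x = (\<lambda>p. if plen p < n then x p else 0)"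

lemma supp_trunc: "supp (trunc n x) \<subseteq> supp x" by (auto simp: supp_def trunc_def)

lemma trunc_PA: "x \<in> PA G \<Longrightarrow> trunc n x \<in> PA G"
  unfolding PA_def using supp_trunc[of n x] by (auto intro: finite_subset)

lemma trunc_idem[simp]: "trunc n (trunc n x) = trunc n x" by (auto simp: trunc_def)
lemma trunc_zero[simp]: "trunc n (\<lambda>_. 0) = (\<lambda>_. 0)" by (auto simp: trunc_def)
lemma trunc_add: "trunc n (\<lambda>p. x p + y p) = (\<lambda>p. trunc n x p + trunc n y p)" by (auto simp: trunc_def)
lemma trunc_diff: "trunc n (\<lambda>p. x p - y p) = (\<lambda>p. trunc n x p - trunc n y p)" by (auto simp: trunc_def)
lemma trunc_smul: "trunc n (\<lambda>p. c * x p) = (\<lambda>p. c * trunc n x p)" by (auto simp: trunc_def)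
lemma trunc_sum: "trunc n (\<lambda>p. \<Sum>i\<in>I. F i p) = (\<lambda>p. \<Sum>i\<in>I. trunc n (F i) p)" by (auto simp: trunc_def)
lemma trunc_bas_short: "plen s < n \<Longrightarrow> trunc n (bas s) = bas s" by (auto simp: trunc_def bas_def)

lemma trunc_pmul_left:
  fixes x y :: "_ \<Rightarrow> 'k::field"
  assumes "finite (supp x)" "finite (supp y)"
  shows "trunc n (pmul G x y) = trunc n (pmul G (trunc n x) y)"
proof
  fix p
  show "trunc n (pmul G x y) p = trunc n (pmul G (trunc n x) y) p"
  proof (cases "plen p < n")
    case True
    have "pmul G x y p = (\<Sum>(q, r)\<in>supp x \<times> supp y. if pend G q = fst r \<and> pjoin q r = p then x q * y r else 0)"
      by (rule pmul_eq_sum_over) (use assms in auto)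
    also have "\<dots> = (\<Sum>(q, r)\<in>supp x \<times> supp y. if pend G q = fst r \<and> pjoin q r = p then trunc n x q * y r else 0)"
      by (rule sum.cong) (use True in \<open>auto simp: trunc_def\<close>)
    also have "\<dots> = pmul G (trunc n x) y p"
      by (rule pmul_eq_sum_over[symmetric]) (use assms supp_trunc in auto)
    finally show ?thesis by (simp add: trunc_def)
  qed (simp add: trunc_def)
qed

lemma trunc_pmul_right:
  fixes x y :: "_ \<Rightarrow> 'k::field"
  assumes "finite (supp x)" "finite (supp y)"
  shows "trunc n (pmul G x y) = trunc n (pmul G x (trunc n y))"
proof
  fix p
  show "trunc n (pmul G x y) p = trunc n (pmul G x (trunc n y)) p"
  proof (cases "plen p < n")
    case True
    have "pmul G x y p = (\<Sum>(q, r)\<in>supp x \<times> supp y. if pend G q = fst r \<and> pjoin q r = p then x q * y r else 0)"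
      by (rule pmul_eq_sum_over) (use assms in auto)
    also have "\<dots> = (\<Sum>(q, r)\<in>supp x \<times> supp y. if pend G q = fst r \<and> pjoin q r = p then x q * trunc n y r else 0)"
      by (rule sum.cong) (use True in \<open>auto simp: trunc_def\<close>)
    also have "\<dots> = pmul G x (trunc n y) p"
      by (rule pmul_eq_sum_over[symmetric]) (use assms supp_trunc in auto)
    finally show ?thesis by (simp add: trunc_def)
  qed (simp add: trunc_def)
qed

lemma trunc_pmul_both:
  fixes x y :: "_ \<Rightarrow> 'k::field"
  assumes "finite (supp x)" "finite (supp y)"
  shows "trunc n (pmul G x y) = trunc n (pmul G (trunc n x) (trunc n y))"
  using trunc_pmul_left[OF assms, of n G] trunc_pmul_right[of "trunc n x" y n G] assms
    finite_subset[OF supp_trunc[of n x]] by simp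

lemma knG_vanishes_short:
  assumes "x \<in> knG G n"
  shows "x \<in> PA G \<and> (\<forall>p. plen p < n \<longrightarrow> x p = 0)"
  using assms
proof (induction rule: knG.induct)
  case (gen p) then have "bas p \<in> PA G" by (simp add: bas_PA)
  moreover have "\<forall>q. plen q < n \<longrightarrow> bas p q = 0" using gen by (auto simp: bas_def)
  ultimately show ?case by blast
next
  case zero then show ?case by simp
next
  case (add x y) then show ?case by (auto intro: add_PA)
next
  case (smul x c) then show ?case by (auto intro: smul_PA)
next
  case (lmul a x)
  have "pmul G a x p = 0" if "plen p < n" for p
  proof (rule ccontr)
    assume "pmul G a x p \<noteq> 0"
    then obtain q r where "a q \<noteq> 0" "x r \<noteq> 0" "pjoin q r = p" using pmul_nonzero_factors by blast
    moreover have "plen r < n" using calculation that by auto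
    ultimately show False using lmul.IH by blast
  qed
  then show ?case using lmul by (auto intro: pmul_PA)
next
  case (rmul a x)
  have "pmul G x a p = 0" if "plen p < n" for p
  proof (rule ccontr)
    assume "pmul G x a p \<noteq> 0"
    then obtain q r where "x q \<noteq> 0" "a r \<noteq> 0" "pjoin q r = p" using pmul_nonzero_factors by blast
    moreover have "plen q < n" using calculation that by auto
    ultimately show False using rmul.IH by blast
  qed
  then show ?case using rmul by (auto intro: pmul_PA)
qed

lemma knG_sum: "finite A \<Longrightarrow> (\<And>i. i \<in> A \<Longrightarrow> F i \<in> knG G n) \<Longrightarrow> (\<lambda>p. \<Sum>i\<in>A. F i p) \<in> knG G n"
proof (induction A rule: finite_induct)
  case empty then show ?case using knG.zero by simp
next
  case (insert a A) then show ?case using knG.add[of "F a" G n "\<lambda>p. \<Sum>i\<in>A. F i p"] by simp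
qed

lemma bas_long_path_knG:
  assumes fq: "finite_quiver G" and p: "is_path G q" "n \<le> plen q"
  shows "bas q \<in> knG G n"
proof -
  obtain v l where q: "q = (v, l)" by (cases q)
  define l1 where "l1 = take n l"
  define l2 where "l2 = drop n l"
  have l: "l = l1 @ l2" by (simp add: l1_def l2_def)
  have len: "length l1 = n" using p q by (simp add: l1_def plen_def)
  have p1: "is_path G (v, l1)" and p2: "is_path G (pend G (v,l1), l2)"
    using is_path_split[of G v l1 l2] p q l fq by auto
  have "pmul G (bas (v,l1)) (bas (pend G (v,l1), l2)) = bas q"
    by (simp add: pmul_bas_bas pjoin_def q l)
  moreover have "bas (v,l1) \<in> knG G n" using p1 len by (intro knG.gen) (auto simp: plen_def)
  ultimately show ?thesis using knG.rmul[of "bas (pend G (v,l1), l2)" G "bas (v,l1)" n] p2 bas_PA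
    by metis
qed

lemma vanishes_short_knG:
  fixes x :: "_ \<Rightarrow> 'k::field"
  assumes fq: "finite_quiver G" and x: "x \<in> PA G" and z: "\<forall>p. plen p < n \<longrightarrow> x p = 0"
  shows "x \<in> knG G n"
proof -
  have "x = (\<lambda>p. \<Sum>q\<in>supp x. x q * bas q p)" using x by (intro bas_expansion) (auto simp: PA_def)
  also have "\<dots> \<in> knG G n"
  proof (rule knG_sum)
    show "finite (supp x)" using x by (simp add: PA_def)
    fix q assume q: "q \<in> supp x"
    then have "is_path G q" using x by (auto simp: PA_def supp_def)
    moreover have "n \<le> plen q"
    proof (rule ccontr)
      assume "\<not> n \<le> plen q"
      then have "x q = 0" using z[rule_format, of q] by simp
      then show False using q by (simp add: supp_def)
    qed
    ultimately show "(\<lambda>p. x q * bas q p) \<in> knG G n" using bas_long_path_knG[OF fq] by (intro knG.smul)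
  qed
  finally show ?thesis .
qed

lemma knG_iff:
  fixes x :: "_ \<Rightarrow> 'k::field"
  assumes fq: "finite_quiver G"
  shows "x \<in> knG G n \<longleftrightarrow> x \<in> PA G \<and> trunc n x = (\<lambda>_. 0)"
  using knG_vanishes_short[of x G n] vanishes_short_knG[OF fq, of x n] by (auto simp: trunc_def fun_eq_iff)

text \<open>Truncating an arbitrary representative gives the same function for every choice,
  so canon n X is a canonical representative of the coset X.\<close>
definition canon :: "nat \<Rightarrow> ('v,'e,'k::field) qelem \<Rightarrow> ('v,'e) path \<Rightarrow> 'k" where
  "canon n X = trunc n (rep X)"

lemma coset_eq_trunc_class:
  fixes x :: "_ \<Rightarrow> 'k::field"
  assumes fq: "finite_quiver G" and x: "x \<in> PA G"
  shows "coset G n x = {y \<in> PA G. trunc n y = trunc n x}"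
proof (rule set_eqI)
  fix y
  show "y \<in> coset G n x \<longleftrightarrow> y \<in> {y \<in> PA G. trunc n y = trunc n x}"
  proof (cases "y \<in> PA G")
    case True
    then have d: "(\<lambda>p. x p - y p) \<in> PA G" using x by (rule diff_PA[rotated])
    have "(\<lambda>p. x p - y p) \<in> knG G n \<longleftrightarrow> trunc n (\<lambda>p. x p - y p) = (\<lambda>_. 0)"
      using d knG_iff[OF fq, of "\<lambda>p. x p - y p" n] by blast
    also have "\<dots> \<longleftrightarrow> trunc n y = trunc n x"
      unfolding trunc_diff fun_eq_iff by auto
    finally show ?thesis using True by (simp add: coset_def)
  qed (simp add: coset_def)
qed

lemma coset_self: "finite_quiver G \<Longrightarrow> x \<in> PA G \<Longrightarrow> x \<in> coset G n x"
  by (simp add: coset_eq_trunc_class)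

lemma rep_mem: "finite_quiver G \<Longrightarrow> X \<in> QA G n \<Longrightarrow> rep X \<in> X"
proof -
  assume fq: "finite_quiver G" and X: "X \<in> QA G n"
  then obtain x where "x \<in> PA G" "X = coset G n x" by (auto simp: QA_def)
  then have "x \<in> X" using coset_self[OF fq] by blast
  then show "rep X \<in> X" unfolding rep_def by (rule someI[of "\<lambda>y. y \<in> X"])
qed

lemma rep_PA: "finite_quiver G \<Longrightarrow> X \<in> QA G n \<Longrightarrow> rep X \<in> PA G"
proof -
  assume fq: "finite_quiver G" and X: "X \<in> QA G n"
  then obtain x where "x \<in> PA G" "X = coset G n x" by (auto simp: QA_def)
  moreover have "rep X \<in> X" using rep_mem[OF fq X] .
  ultimately show ?thesis by (simp add: coset_def)
qed

lemma QA_eq_trunc_class: "finite_quiver G \<Longrightarrow> X \<in> QA G n \<Longrightarrow> X = {y \<in> PA G. trunc n y = canon n X}"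
proof -
  assume fq: "finite_quiver G" and X: "X \<in> QA G n"
  then obtain x where x: "x \<in> PA G" "X = coset G n x" by (auto simp: QA_def)
  then have "rep X \<in> X" using rep_mem fq X by blast
  then have "trunc n (rep X) = trunc n x" using x coset_eq_trunc_class[OF fq] by auto
  then show ?thesis using x coset_eq_trunc_class[OF fq] by (auto simp: canon_def)
qed

lemma QA_eqI: "finite_quiver G \<Longrightarrow> X \<in> QA G n \<Longrightarrow> Y \<in> QA G n \<Longrightarrow> canon n X = canon n Y \<Longrightarrow> X = Y"
proof -
  assume a: "finite_quiver G" "X \<in> QA G n" "Y \<in> QA G n" "canon n X = canon n Y"
  have "X = {y \<in> PA G. trunc n y = canon n X}" using QA_eq_trunc_class a by blast
  also have "\<dots> = Y" using QA_eq_trunc_class[of G Y n] a by simp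
  finally show "X = Y" .
qed

lemma coset_QA: "x \<in> PA G \<Longrightarrow> coset G n x \<in> QA G n" by (simp add: QA_def)

lemma canon_coset: "finite_quiver G \<Longrightarrow> x \<in> PA G \<Longrightarrow> canon n (coset G n x) = trunc n x"
  using rep_mem[of G "coset G n x" n] coset_eq_trunc_class[of G x n] by (auto simp: canon_def QA_def)

lemma canon_PA: "finite_quiver G \<Longrightarrow> X \<in> QA G n \<Longrightarrow> canon n X \<in> PA G"
  by (simp add: canon_def trunc_PA rep_PA)

lemma trunc_canon: "trunc n (canon n X) = canon n X" by (simp add: canon_def)

lemma coset_eq_iff: "finite_quiver G \<Longrightarrow> x \<in> PA G \<Longrightarrow> y \<in> PA G \<Longrightarrow>
   coset G n x = coset G n y \<longleftrightarrow> trunc n x = trunc n y"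
proof
  assume "finite_quiver G" "x \<in> PA G" "y \<in> PA G" "coset G n x = coset G n y"
  then show "trunc n x = trunc n y" using canon_coset[of G x n] canon_coset[of G y n] by simp
next
  assume "finite_quiver G" "x \<in> PA G" "y \<in> PA G" "trunc n x = trunc n y"
  then show "coset G n x = coset G n y"
    by (intro QA_eqI[of G _ n]) (auto simp: coset_QA canon_coset)
qed

lemma coset_canon: "finite_quiver G \<Longrightarrow> X \<in> QA G n \<Longrightarrow> coset G n (canon n X) = X"
  by (rule QA_eqI[of G _ n]) (auto simp: coset_QA canon_PA canon_coset trunc_canon)

lemma qadd_QA: "finite_quiver G \<Longrightarrow> X \<in> QA G n \<Longrightarrow> Y \<in> QA G n \<Longrightarrow> qadd G n X Y \<in> QA G n"
  by (simp add: qadd_def coset_QA add_PA rep_PA)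
lemma qsmul_QA: "finite_quiver G \<Longrightarrow> X \<in> QA G n \<Longrightarrow> qsmul G n c X \<in> QA G n"
  by (simp add: qsmul_def coset_QA smul_PA rep_PA)
lemma qmul_QA: "finite_quiver G \<Longrightarrow> X \<in> QA G n \<Longrightarrow> Y \<in> QA G n \<Longrightarrow> qmul G n X Y \<in> QA G n"
  by (simp add: qmul_def coset_QA pmul_PA rep_PA)
lemma qsum_QA: "finite_quiver G \<Longrightarrow> finite S \<Longrightarrow> (\<And>i. i \<in> S \<Longrightarrow> F i \<in> QA G n) \<Longrightarrow> qsum G n S F \<in> QA G n"
  unfolding qsum_def by (intro coset_QA sum_PA) (auto intro: rep_PA)

lemma canon_qadd: "finite_quiver G \<Longrightarrow> X \<in> QA G n \<Longrightarrow> Y \<in> QA G n \<Longrightarrow>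
   canon n (qadd G n X Y) = (\<lambda>p. canon n X p + canon n Y p)"
  by (simp add: qadd_def canon_coset add_PA rep_PA trunc_add) (simp add: canon_def)
lemma canon_qsmul: "finite_quiver G \<Longrightarrow> X \<in> QA G n \<Longrightarrow>
   canon n (qsmul G n c X) = (\<lambda>p. c * canon n X p)"
  by (simp add: qsmul_def canon_coset smul_PA rep_PA trunc_smul) (simp add: canon_def)
lemma canon_qzero: "finite_quiver G \<Longrightarrow> canon n (qzero G n) = (\<lambda>_. 0)"
  by (simp add: qzero_def canon_coset)
lemma canon_qsum: "finite_quiver G \<Longrightarrow> finite S \<Longrightarrow> (\<And>i. i \<in> S \<Longrightarrow> F i \<in> QA G n) \<Longrightarrow>
   canon n (qsum G n S F) = (\<lambda>p. \<Sum>i\<in>S. canon n (F i) p)"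
proof -
  assume a: "finite_quiver G" "finite S" "\<And>i. i \<in> S \<Longrightarrow> F i \<in> QA G n"
  have "(\<lambda>p. \<Sum>i\<in>S. rep (F i) p) \<in> PA G" using a by (intro sum_PA) (auto intro: rep_PA)
  then have "canon n (coset G n (\<lambda>p. \<Sum>i\<in>S. rep (F i) p)) = trunc n (\<lambda>p. \<Sum>i\<in>S. rep (F i) p)"
    using a(1) by (rule canon_coset[rotated])
  then show ?thesis unfolding qsum_def by (simp add: trunc_sum canon_def)
qed
lemma canon_qmul: "finite_quiver G \<Longrightarrow> X \<in> QA G n \<Longrightarrow> Y \<in> QA G n \<Longrightarrow>
   canon n (qmul G n X Y) = trunc n (pmul G (canon n X) (canon n Y))"
proof -
  assume a: "finite_quiver G" "X \<in> QA G n" "Y \<in> QA G n"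
  then have "canon n (qmul G n X Y) = trunc n (pmul G (rep X) (rep Y))"
    by (simp add: qmul_def canon_coset pmul_PA rep_PA)
  also have "\<dots> = trunc n (pmul G (canon n X) (canon n Y))"
    unfolding canon_def by (rule trunc_pmul_both) (use a rep_PA PA_finite in blast)+
  finally show ?thesis .
qed

lemma coset_add: "finite_quiver G \<Longrightarrow> x \<in> PA G \<Longrightarrow> y \<in> PA G \<Longrightarrow>
  coset G n (\<lambda>p. x p + y p) = qadd G n (coset G n x) (coset G n y)"
  by (rule QA_eqI[of G _ n]) (auto simp: canon_qadd canon_coset coset_QA add_PA qadd_QA trunc_add)
lemma coset_smul: "finite_quiver G \<Longrightarrow> x \<in> PA G \<Longrightarrow>
  coset G n (\<lambda>p. c * x p) = qsmul G n c (coset G n x)"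
  by (rule QA_eqI[of G _ n]) (auto simp: canon_qsmul canon_coset coset_QA smul_PA qsmul_QA trunc_smul)
lemma coset_mul: "finite_quiver G \<Longrightarrow> x \<in> PA G \<Longrightarrow> y \<in> PA G \<Longrightarrow>
  coset G n (pmul G x y) = qmul G n (coset G n x) (coset G n y)"
  by (rule QA_eqI[of G _ n]) (auto simp: canon_qmul canon_coset coset_QA pmul_PA qmul_QA
        intro: trunc_pmul_both PA_finite)

section \<open>Derivations of the quotient on truncated representatives\<close>

text \<open>A derivation \<delta> of k\<Gamma>/k^n\<Gamma> is recorded as d x = canon n (\<delta> (coset G n x)).\<close>
definition trunc_der :: "('v,'e) quiver \<Rightarrow> nat \<Rightarrow> ((('v,'e) path \<Rightarrow> 'k::field) \<Rightarrow> (('v,'e) path \<Rightarrow> 'k)) \<Rightarrow> bool" where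
  "trunc_der G n d \<longleftrightarrow> (\<forall>x\<in>PA G. d x \<in> PA G \<and> trunc n (d x) = d x) \<and>
     (\<forall>x\<in>PA G. \<forall>y\<in>PA G. d (\<lambda>p. x p + y p) = (\<lambda>p. d x p + d y p)) \<and>
     (\<forall>c. \<forall>x\<in>PA G. d (\<lambda>p. c * x p) = (\<lambda>p. c * d x p)) \<and>
     (\<forall>x\<in>PA G. \<forall>y\<in>PA G. d (pmul G x y) = (\<lambda>p. trunc n (pmul G (d x) y) p + trunc n (pmul G x (d y)) p)) \<and>
     (\<forall>x\<in>PA G. \<forall>y\<in>PA G. trunc n x = trunc n y \<longrightarrow> d x = d y)"

lemma trunc_derD:
  assumes "trunc_der G n d"
  shows "\<And>x. x \<in> PA G \<Longrightarrow> d x \<in> PA G"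
    "\<And>x. x \<in> PA G \<Longrightarrow> trunc n (d x) = d x"
    "\<And>x y. x \<in> PA G \<Longrightarrow> y \<in> PA G \<Longrightarrow> d (\<lambda>p. x p + y p) = (\<lambda>p. d x p + d y p)"
    "\<And>c x. x \<in> PA G \<Longrightarrow> d (\<lambda>p. c * x p) = (\<lambda>p. c * d x p)"
    "\<And>x y. x \<in> PA G \<Longrightarrow> y \<in> PA G \<Longrightarrow> d (pmul G x y) = (\<lambda>p. trunc n (pmul G (d x) y) p + trunc n (pmul G x (d y)) p)"
    "\<And>x y. x \<in> PA G \<Longrightarrow> y \<in> PA G \<Longrightarrow> trunc n x = trunc n y \<Longrightarrow> d x = d y"
  using assms unfolding trunc_der_def by blast+

lemma trunc_der_zero:
  assumes "trunc_der G n d"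
  shows "d (\<lambda>_. 0) = (\<lambda>_. 0)"
  using trunc_derD(4)[OF assms, of "\<lambda>_. 0" 0] by simp

lemma trunc_der_long_path:
  assumes "trunc_der G n d" "x \<in> PA G" "n \<le> plen q"
  shows "d x q = 0"
  using trunc_derD(2)[OF assms(1,2)] assms(3) by (metis trunc_def not_le)

lemma trunc_der_path:
  assumes "trunc_der G n d" "x \<in> PA G" "d x q \<noteq> 0"
  shows "is_path G q"
  using trunc_derD(1)[OF assms(1,2)] assms(3) by (rule PA_path)

lemma Diff_imp_trunc_der:
  fixes \<delta> :: "('v,'e,'k::field) qelem \<Rightarrow> ('v,'e,'k) qelem"
  assumes fq: "finite_quiver G" and D: "\<delta> \<in> Diff G n"
  shows "trunc_der G n (\<lambda>x. canon n (\<delta> (coset G n x)))"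
proof -
  have DQ: "\<And>X. X \<in> QA G n \<Longrightarrow> \<delta> X \<in> QA G n"
    and Dadd: "\<And>X Y. X \<in> QA G n \<Longrightarrow> Y \<in> QA G n \<Longrightarrow> \<delta> (qadd G n X Y) = qadd G n (\<delta> X) (\<delta> Y)"
    and Dsmul: "\<And>c X. X \<in> QA G n \<Longrightarrow> \<delta> (qsmul G n c X) = qsmul G n c (\<delta> X)"
    and Dmul: "\<And>X Y. X \<in> QA G n \<Longrightarrow> Y \<in> QA G n \<Longrightarrow>
       \<delta> (qmul G n X Y) = qadd G n (qmul G n (\<delta> X) Y) (qmul G n X (\<delta> Y))"
    using D by (simp_all add: Diff_def)
  let ?d = "\<lambda>x. canon n (\<delta> (coset G n x))"
  show ?thesis unfolding trunc_der_def
  proof (intro conjI ballI allI impI)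
    fix x :: "_ \<Rightarrow> 'k" assume x: "x \<in> PA G"
    show "?d x \<in> PA G" using x by (intro canon_PA fq DQ coset_QA)
    show "trunc n (?d x) = ?d x" by (simp add: trunc_canon)
  next
    fix x y :: "_ \<Rightarrow> 'k" assume x: "x \<in> PA G" and y: "y \<in> PA G"
    show "?d (\<lambda>p. x p + y p) = (\<lambda>p. ?d x p + ?d y p)"
      using x y by (simp add: coset_add[OF fq] Dadd coset_QA canon_qadd[OF fq] DQ)
    show "?d (pmul G x y) = (\<lambda>p. trunc n (pmul G (?d x) y) p + trunc n (pmul G x (?d y)) p)"
    proof -
      have "?d (pmul G x y) = canon n (qadd G n (qmul G n (\<delta> (coset G n x)) (coset G n y))
                                 (qmul G n (coset G n x) (\<delta> (coset G n y))))"
        using x y by (simp add: coset_mul[OF fq] Dmul coset_QA)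
      also have "\<dots> = (\<lambda>p. trunc n (pmul G (?d x) (trunc n y)) p + trunc n (pmul G (trunc n x) (?d y)) p)"
        using x y by (simp add: canon_qadd[OF fq] canon_qmul[OF fq] qmul_QA[OF fq] DQ coset_QA canon_coset[OF fq])
      also have "\<dots> = (\<lambda>p. trunc n (pmul G (?d x) y) p + trunc n (pmul G x (?d y)) p)"
      proof -
        have f1: "finite (supp (?d x))" "finite (supp (?d y))"
          using x y by (auto intro!: PA_finite canon_PA[OF fq] DQ coset_QA)
        show ?thesis
          using x y trunc_pmul_right[of "?d x" y n G] trunc_pmul_left[of x "?d y" n G] f1 PA_finite[OF x] PA_finite[OF y]
          by simp
      qed
      finally show ?thesis .
    qed
    assume "trunc n x = trunc n y"
    then show "?d x = ?d y" using x y coset_eq_iff[OF fq x y, of n] by simp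
  next
    fix c and x :: "_ \<Rightarrow> 'k" assume x: "x \<in> PA G"
    show "?d (\<lambda>p. c * x p) = (\<lambda>p. c * ?d x p)"
      using x by (simp add: coset_smul[OF fq] Dsmul coset_QA canon_qsmul[OF fq] DQ)
  qed
qed

lemma trunc_der_imp_Diff:
  fixes \<delta> :: "('v,'e,'k::field) qelem \<Rightarrow> ('v,'e,'k) qelem"
  assumes fq: "finite_quiver G" and d: "trunc_der G n d"
    and ext: "\<delta> \<in> extensional (QA G n)"
    and DQ: "\<And>X. X \<in> QA G n \<Longrightarrow> \<delta> X \<in> QA G n"
    and Dv: "\<And>X. X \<in> QA G n \<Longrightarrow> canon n (\<delta> X) = d (canon n X)"
  shows "\<delta> \<in> Diff G n"
  unfolding Diff_def
proof (intro CollectI conjI ballI allI ext DQ)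
  fix X Y :: "('v,'e,'k) qelem" assume X: "X \<in> QA G n" and Y: "Y \<in> QA G n"
  have qX: "canon n X \<in> PA G" and qY: "canon n Y \<in> PA G" using X Y fq by (auto intro: canon_PA)
  show "\<delta> (qadd G n X Y) = qadd G n (\<delta> X) (\<delta> Y)"
    by (rule QA_eqI[OF fq, of _ n]) (use X Y qX qY in \<open>auto simp: DQ qadd_QA[OF fq] Dv canon_qadd[OF fq] trunc_derD(3)[OF d]\<close>)
  show "\<delta> (qmul G n X Y) = qadd G n (qmul G n (\<delta> X) Y) (qmul G n X (\<delta> Y))"
  proof (rule QA_eqI[OF fq, of _ n])
    show "\<delta> (qmul G n X Y) \<in> QA G n" using X Y by (simp add: DQ qmul_QA[OF fq])
    show "qadd G n (qmul G n (\<delta> X) Y) (qmul G n X (\<delta> Y)) \<in> QA G n"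
      using X Y by (simp add: DQ qmul_QA[OF fq] qadd_QA[OF fq])
    have "canon n (\<delta> (qmul G n X Y)) = d (trunc n (pmul G (canon n X) (canon n Y)))"
      using X Y by (simp add: Dv qmul_QA[OF fq] canon_qmul[OF fq])
    also have "\<dots> = d (pmul G (canon n X) (canon n Y))"
      by (rule trunc_derD(6)[OF d]) (use qX qY in \<open>auto intro: trunc_PA pmul_PA\<close>)
    also have "\<dots> = canon n (qadd G n (qmul G n (\<delta> X) Y) (qmul G n X (\<delta> Y)))"
      using X Y qX qY by (simp add: trunc_derD(5)[OF d] canon_qadd[OF fq] canon_qmul[OF fq] DQ qmul_QA[OF fq] Dv)
    finally show "canon n (\<delta> (qmul G n X Y)) = canon n (qadd G n (qmul G n (\<delta> X) Y) (qmul G n X (\<delta> Y)))" .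
  qed
next
  fix c and X :: "('v,'e,'k) qelem" assume X: "X \<in> QA G n"
  have qX: "canon n X \<in> PA G" using X fq by (auto intro: canon_PA)
  show "\<delta> (qsmul G n c X) = qsmul G n c (\<delta> X)"
    by (rule QA_eqI[OF fq, of _ n]) (use X qX in \<open>auto simp: DQ qsmul_QA[OF fq] Dv canon_qsmul[OF fq] trunc_derD(4)[OF d]\<close>)
qed

lemma Diff_QA: "\<delta> \<in> Diff G n \<Longrightarrow> X \<in> QA G n \<Longrightarrow> \<delta> X \<in> QA G n"
  by (simp add: Diff_def)

lemma canon_lincomb:
  fixes S :: "(('v,'e,'k::field) qelem \<Rightarrow> ('v,'e,'k) qelem) set"
  assumes fq: "finite_quiver G" and S: "finite S" "S \<subseteq> Diff G n" and X: "X \<in> QA G n"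
  shows "canon n (qsum G n S (\<lambda>D. qsmul G n (c D) (D X))) = (\<lambda>p. \<Sum>D\<in>S. c D * canon n (D X) p)"
proof -
  have "\<And>D. D \<in> S \<Longrightarrow> qsmul G n (c D) (D X) \<in> QA G n"
    using S X Diff_QA qsmul_QA[OF fq] by blast
  then have "canon n (qsum G n S (\<lambda>D. qsmul G n (c D) (D X))) = (\<lambda>p. \<Sum>D\<in>S. canon n (qsmul G n (c D) (D X)) p)"
    by (rule canon_qsum[OF fq S(1)])
  also have "\<dots> = (\<lambda>p. \<Sum>D\<in>S. c D * canon n (D X) p)"
  proof (rule ext, rule sum.cong[OF refl])
    fix p D assume "D \<in> S"
    then have "D X \<in> QA G n" using S X Diff_QA by blast
    then show "canon n (qsmul G n (c D) (D X)) p = c D * canon n (D X) p" by (simp add: canon_qsmul[OF fq])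
  qed
  finally show ?thesis .
qed

lemma lincomb_QA:
  fixes S :: "(('v,'e,'k::field) qelem \<Rightarrow> ('v,'e,'k) qelem) set"
  assumes fq: "finite_quiver G" and S: "finite S" "S \<subseteq> Diff G n" and X: "X \<in> QA G n"
  shows "qsum G n S (\<lambda>D. qsmul G n (c D) (D X)) \<in> QA G n"
  by (rule qsum_QA[OF fq S(1)]) (use S X Diff_QA qsmul_QA[OF fq] in blast)

lemma trunc_der_lincomb:
  fixes F :: "'i \<Rightarrow> ((('v,'e) path \<Rightarrow> 'k::field) \<Rightarrow> (('v,'e) path \<Rightarrow> 'k))"
  assumes I: "finite I" and F: "\<And>i. i \<in> I \<Longrightarrow> trunc_der G n (F i)"
  shows "trunc_der G n (\<lambda>x p. \<Sum>i\<in>I. c i * F i x p)"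
  unfolding trunc_der_def
proof (intro conjI ballI allI impI)
  fix x :: "_ \<Rightarrow> 'k" assume x: "x \<in> PA G"
  show "(\<lambda>p. \<Sum>i\<in>I. c i * F i x p) \<in> PA G"
    using I x F by (intro sum_PA smul_PA) (auto intro: trunc_derD(1))
  show "trunc n (\<lambda>p. \<Sum>i\<in>I. c i * F i x p) = (\<lambda>p. \<Sum>i\<in>I. c i * F i x p)"
    unfolding trunc_sum trunc_smul using trunc_derD(2)[OF F x] by simp
next
  fix x y :: "_ \<Rightarrow> 'k" assume x: "x \<in> PA G" and y: "y \<in> PA G"
  show "(\<lambda>p. \<Sum>i\<in>I. c i * F i (\<lambda>p. x p + y p) p) =
    (\<lambda>p. (\<Sum>i\<in>I. c i * F i x p) + (\<Sum>i\<in>I. c i * F i y p))"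
    using trunc_derD(3)[OF F x y] by (simp add: sum.distrib distrib_left)
  have fx: "\<And>i. i \<in> I \<Longrightarrow> finite (supp (F i x))" "\<And>i. i \<in> I \<Longrightarrow> finite (supp (F i y))"
    using x y F by (auto intro: PA_finite trunc_derD(1))
  have "(\<lambda>p. trunc n (pmul G (\<lambda>p. \<Sum>i\<in>I. c i * F i x p) y) p + trunc n (pmul G x (\<lambda>p. \<Sum>i\<in>I. c i * F i y p)) p)
      = (\<lambda>p. \<Sum>i\<in>I. c i * (trunc n (pmul G (F i x) y) p + trunc n (pmul G x (F i y)) p))"
  proof -
    have L: "pmul G (\<lambda>p. \<Sum>i\<in>I. c i * F i x p) y = (\<lambda>p. \<Sum>i\<in>I. c i * pmul G (F i x) y p)"
      by (rule pmul_lin_left) (use I fx PA_finite[OF y] in auto)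
    have R: "pmul G x (\<lambda>p. \<Sum>i\<in>I. c i * F i y p) = (\<lambda>p. \<Sum>i\<in>I. c i * pmul G x (F i y) p)"
      by (rule pmul_lin_right) (use I fx PA_finite[OF x] in auto)
    show ?thesis unfolding L R trunc_sum trunc_smul by (simp add: sum.distrib distrib_left)
  qed
  also have "\<dots> = (\<lambda>p. \<Sum>i\<in>I. c i * F i (pmul G x y) p)"
    using trunc_derD(5)[OF F x y] by simp
  finally show "(\<lambda>p. \<Sum>i\<in>I. c i * F i (pmul G x y) p) =
    (\<lambda>p. trunc n (pmul G (\<lambda>p. \<Sum>i\<in>I. c i * F i x p) y) p + trunc n (pmul G x (\<lambda>p. \<Sum>i\<in>I. c i * F i y p)) p)"
    by simp
  assume "trunc n x = trunc n y"
  then show "(\<lambda>p. \<Sum>i\<in>I. c i * F i x p) = (\<lambda>p. \<Sum>i\<in>I. c i * F i y p)"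
    using trunc_derD(6)[OF F x y] by simp
next
  fix a and x :: "_ \<Rightarrow> 'k" assume x: "x \<in> PA G"
  show "(\<lambda>p. \<Sum>i\<in>I. c i * F i (\<lambda>p. a * x p) p) = (\<lambda>p. a * (\<Sum>i\<in>I. c i * F i x p))"
    using trunc_derD(4)[OF F x] by (simp add: sum_distrib_left mult.left_commute)
qed

lemma trunc_der_diff:
  assumes "trunc_der G n d1" "trunc_der G n d2"
  shows "trunc_der G n (\<lambda>x p. d1 x p - d2 x p)"
proof -
  have "trunc_der G n (\<lambda>x p. \<Sum>b\<in>{True, False}. (if b then 1 else -1) * (if b then d1 else d2) x p)"
    by (rule trunc_der_lincomb) (use assms in auto)
  moreover have "(\<lambda>x p. \<Sum>b\<in>{True, False}. (if b then 1 else -1) * (if b then d1 else d2) x p)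
     = (\<lambda>x p. d1 x p - d2 x p)" by (simp add: fun_eq_iff)
  ultimately show ?thesis by simp
qed

lemma trunc_der_trunc_comp:
  fixes D :: "(('v,'e) path \<Rightarrow> 'k::field) \<Rightarrow> (('v,'e) path \<Rightarrow> 'k)"
  assumes PA: "\<And>x. x \<in> PA G \<Longrightarrow> D x \<in> PA G"
    and add: "\<And>x y. x \<in> PA G \<Longrightarrow> y \<in> PA G \<Longrightarrow> D (\<lambda>p. x p + y p) = (\<lambda>p. D x p + D y p)"
    and smul: "\<And>c x. x \<in> PA G \<Longrightarrow> D (\<lambda>p. c * x p) = (\<lambda>p. c * D x p)"
    and leibniz: "\<And>x y. x \<in> PA G \<Longrightarrow> y \<in> PA G \<Longrightarrow>
                   D (pmul G x y) = (\<lambda>p. pmul G (D x) y p + pmul G x (D y) p)"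
    and ideal: "\<And>x. x \<in> PA G \<Longrightarrow> trunc n x = (\<lambda>_. 0) \<Longrightarrow> trunc n (D x) = (\<lambda>_. 0)"
  shows "trunc_der G n (\<lambda>x. trunc n (D x))"
  unfolding trunc_der_def
proof (intro conjI ballI allI impI)
  fix x :: "_ \<Rightarrow> 'k" assume x: "x \<in> PA G"
  show "trunc n (D x) \<in> PA G" "trunc n (trunc n (D x)) = trunc n (D x)"
    using PA[OF x] by (simp_all add: trunc_PA)
  fix c show "trunc n (D (\<lambda>p. c * x p)) = (\<lambda>p. c * trunc n (D x) p)"
    using smul[OF x] by (simp add: trunc_smul)
next
  fix x y :: "_ \<Rightarrow> 'k" assume x: "x \<in> PA G" and y: "y \<in> PA G"
  show "trunc n (D (\<lambda>p. x p + y p)) = (\<lambda>p. trunc n (D x) p + trunc n (D y) p)"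
    using add[OF x y] by (simp add: trunc_add)
  have fin: "finite (supp x)" "finite (supp y)" "finite (supp (D x))" "finite (supp (D y))"
    using x y PA by (auto intro: PA_finite)
  show "trunc n (D (pmul G x y)) =
      (\<lambda>p. trunc n (pmul G (trunc n (D x)) y) p + trunc n (pmul G x (trunc n (D y))) p)"
    using fin trunc_pmul_left[of "D x" y n G] trunc_pmul_right[of x "D y" n G]
    by (simp add: leibniz[OF x y] trunc_add)
  have Ddiff: "D (\<lambda>p. x p - y p) = (\<lambda>p. D x p - D y p)"
    using add[OF x smul_PA[OF y, of "-1"]] smul[OF y, of "-1"] by simp
  assume "trunc n x = trunc n y"
  then have "trunc n (\<lambda>p. x p - y p) = (\<lambda>_. 0)" by (simp add: trunc_diff)
  then have "trunc n (D (\<lambda>p. x p - y p)) = (\<lambda>_. 0)" by (rule ideal[OF diff_PA[OF x y]])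
  then show "trunc n (D x) = trunc n (D y)" by (simp add: Ddiff trunc_diff fun_eq_iff)
qed


lemma trunc_der_vert_idem_support:
  fixes d :: "(('v,'e) path \<Rightarrow> 'k::field) \<Rightarrow> _"
  assumes d: "trunc_der G n d" and w: "w \<in> verts G" and nz: "d (vert_idem w) q \<noteq> 0"
  shows "(pend G q = w) \<noteq> (fst q = w)"
proof -
  have ew: "vert_idem w \<in> PA G" using w by (rule vert_idem_PA)
  have fin: "finite (supp (d (vert_idem w)))" using trunc_derD(1)[OF d ew] by (rule PA_finite)
  have short: "plen q < n" using trunc_der_long_path[OF d ew] nz by (meson not_le)
  have "d (vert_idem w) q =
      trunc n (pmul G (d (vert_idem w)) (vert_idem w)) q + trunc n (pmul G (vert_idem w) (d (vert_idem w))) q"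
    using fun_cong[OF trunc_derD(5)[OF d ew ew], of q] by (simp add: vert_idem_mult_self)
  also have "\<dots> = (if pend G q = w then d (vert_idem w) q else 0) + (if fst q = w then d (vert_idem w) q else 0)"
    using short fin by (simp add: trunc_def pmul_vert_idem_left pmul_vert_idem_right)
  finally show ?thesis using nz by (auto split: if_splits)
qed

lemma trunc_der_vert_idem_pair:
  fixes d :: "(('v,'e) path \<Rightarrow> 'k::field) \<Rightarrow> _"
  assumes d: "trunc_der G n d" and v: "v \<in> verts G" and w: "w \<in> verts G" and vw: "v \<noteq> w"
  shows "(if pend G q = w then d (vert_idem v) q else 0) + (if fst q = v then d (vert_idem w) q else 0) = 0"
proof (cases "plen q < n")
  case True
  have e: "vert_idem v \<in> PA G" "vert_idem w \<in> PA G" using v w by (auto intro: vert_idem_PA)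
  have fin: "finite (supp (d (vert_idem v)))" "finite (supp (d (vert_idem w)))"
    using trunc_derD(1)[OF d e(1)] trunc_derD(1)[OF d e(2)] by (auto intro: PA_finite)
  have "0 = trunc n (pmul G (d (vert_idem v)) (vert_idem w)) q + trunc n (pmul G (vert_idem v) (d (vert_idem w))) q"
    using fun_cong[OF trunc_derD(5)[OF d e], of q] vw by (simp add: vert_idem_mult_other trunc_der_zero[OF d])
  then show ?thesis using True fin by (simp add: trunc_def pmul_vert_idem_left pmul_vert_idem_right)
next
  case False
  then show ?thesis
    using trunc_der_long_path[OF d vert_idem_PA[OF v], of q] trunc_der_long_path[OF d vert_idem_PA[OF w], of q]
    by simp
qed

lemma loop_power_is_path:
  assumes "finite_quiver G" "a \<in> arcs G" "qsrc G a = v" "qtgt G a = v"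
  shows "is_path G (v, replicate m a)" and "pend G (v, replicate m a) = v"
proof -
  have "chain G v (replicate m a)" using assms(3,4) by (induction m) auto
  then show "is_path G (v, replicate m a)" using assms(1-3) by (auto simp: is_path_def finite_quiver_def)
  show "pend G (v, replicate m a) = v" using assms(4) by (simp add: pend_def)
qed

lemma trunc_der_loop_power:
  fixes d :: "(('v,'e) path \<Rightarrow> 'k::field) \<Rightarrow> _"
  assumes fq: "finite_quiver G" and d: "trunc_der G n d"
    and a: "a \<in> arcs G" "qsrc G a = v" "qtgt G a = v" and k: "Suc k \<le> n"
  shows "d (bas (v, replicate (Suc k) a)) (v, replicate k a) = of_nat (Suc k) * d (bas (v, [a])) (v, [])"
  using k
proof (induction k)
  case 0 then show ?case by simp
next
  case (Suc k)
  let ?pw = "\<lambda>m. (v, replicate m a)"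
  note pw = loop_power_is_path[OF fq a]
  have pwPA: "bas (?pw m) \<in> PA G" for m using pw(1) by (rule bas_PA)
  have aPA: "bas (v, [a]) \<in> PA G" using pwPA[of 1] by simp
  have mul: "bas (?pw (Suc m)) = pmul G (bas (?pw m)) (bas (v, [a]))" for m
    using pw(2)[of m] by (simp add: pmul_bas_bas pjoin_def replicate_append_same)
  have "d (bas (?pw (Suc (Suc k)))) = (\<lambda>p. trunc n (pmul G (d (bas (?pw (Suc k)))) (bas (v, [a]))) p +
          trunc n (pmul G (bas (?pw (Suc k))) (d (bas (v, [a])))) p)"
    unfolding mul[of "Suc k"] by (rule trunc_derD(5)[OF d pwPA aPA])
  moreover have "pmul G (d (bas (?pw (Suc k)))) (bas (v, [a])) (?pw (Suc k)) = d (bas (?pw (Suc k))) (?pw k)"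
    using pmul_bas_right_apply[OF PA_finite[OF trunc_derD(1)[OF d pwPA[of "Suc k"]]], of G "(v, [a])" v "replicate k a"]
      pw(2)[of k] by (simp add: replicate_append_same)
  moreover have "pmul G (bas (?pw (Suc k))) (d (bas (v, [a]))) (?pw (Suc k)) = d (bas (v, [a])) (v, [])"
    using pmul_bas_left_apply[OF PA_finite[OF trunc_derD(1)[OF d aPA]], of G "?pw (Suc k)" "[]"] pw(2)[of "Suc k"]
    by (simp del: replicate_Suc)
  ultimately show ?case using Suc by (simp add: trunc_def plen_def algebra_simps)
qed

text \<open>Since a^n lies in k^n\<Gamma>, Leibniz' rule yields n \<cdot> d(a)(e_v) = 0 for a loop a at v;
  this is where characteristic 0 is used.\<close>
lemma trunc_der_loop_vertex_coeff:
  fixes d :: "(('v,'e) path \<Rightarrow> 'k::field_char_0) \<Rightarrow> _"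
  assumes fq: "finite_quiver G" and d: "trunc_der G n d" and n: "1 \<le> n"
    and a: "a \<in> arcs G" "qsrc G a = v" "qtgt G a = v"
  shows "d (bas (v, [a])) (v, []) = 0"
proof -
  obtain k where k: "n = Suc k" using n by (cases n) auto
  have pw: "is_path G (v, replicate n a)" by (rule loop_power_is_path(1)[OF fq a])
  then have "(bas (v, replicate n a) :: _ \<Rightarrow> 'k) \<in> knG G n" by (intro knG.gen) (simp_all add: plen_def)
  then have "trunc n (bas (v, replicate n a) :: _ \<Rightarrow> 'k) = trunc n (\<lambda>_. 0)"
    using knG_iff[OF fq] by auto
  then have "d (bas (v, replicate n a)) = (\<lambda>_. 0)"
    using trunc_derD(6)[OF d bas_PA[OF pw] zero_PA] trunc_der_zero[OF d] by simp
  then have "of_nat n * d (bas (v, [a])) (v, []) = 0"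
    using trunc_der_loop_power[OF fq d a, of k] k by simp
  then show ?thesis using n by simp
qed

lemma trunc_der_arc_support:
  fixes d :: "(('v,'e) path \<Rightarrow> 'k::field) \<Rightarrow> _"
  assumes fq: "finite_quiver G" and d: "trunc_der G n d" and dv: "\<And>v. v \<in> verts G \<Longrightarrow> d (vert_idem v) = (\<lambda>_. 0)"
    and a: "a \<in> arcs G" and nz: "d (bas (apath G a)) q \<noteq> 0"
  shows "fst q = qsrc G a \<and> pend G q = qtgt G a"
proof -
  let ?x = "bas (apath G a) :: _ \<Rightarrow> 'k"
  have sV: "qsrc G a \<in> verts G" and tV: "qtgt G a \<in> verts G" using fq a by (auto simp: finite_quiver_def)
  have xPA: "?x \<in> PA G" by (rule bas_PA[OF apath_is_path[OF fq a]])
  have es: "vert_idem (qsrc G a) \<in> PA G" and et: "vert_idem (qtgt G a) \<in> PA G" using sV tV by (auto intro: vert_idem_PA)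
  have fin: "finite (supp (d ?x))" using trunc_derD(1)[OF d xPA] by (rule PA_finite)
  have short: "plen q < n" using trunc_der_long_path[OF d xPA] nz by (meson not_le)
  have "?x = pmul G (vert_idem (qsrc G a)) ?x" by (simp add: pmul_bas_bas apath_def pend_def pjoin_def)
  then have "d ?x = (\<lambda>p. trunc n (pmul G (d (vert_idem (qsrc G a))) ?x) p + trunc n (pmul G (vert_idem (qsrc G a)) (d ?x)) p)"
    using trunc_derD(5)[OF d es xPA] by simp
  then have "d ?x q = trunc n (pmul G (d (vert_idem (qsrc G a))) ?x) q + trunc n (pmul G (vert_idem (qsrc G a)) (d ?x)) q"
    by (rule fun_cong)
  then have 1: "d ?x q = (if fst q = qsrc G a then d ?x q else 0)"
    using dv[OF sV] short fin by (simp add: trunc_def pmul_vert_idem_left)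
  have "?x = pmul G ?x (vert_idem (qtgt G a))" by (simp add: pmul_bas_bas apath_def pend_def pjoin_def)
  then have "d ?x = (\<lambda>p. trunc n (pmul G (d ?x) (vert_idem (qtgt G a))) p + trunc n (pmul G ?x (d (vert_idem (qtgt G a)))) p)"
    using trunc_derD(5)[OF d xPA et] by simp
  then have "d ?x q = trunc n (pmul G (d ?x) (vert_idem (qtgt G a))) q + trunc n (pmul G ?x (d (vert_idem (qtgt G a)))) q"
    by (rule fun_cong)
  then have 2: "d ?x q = (if pend G q = qtgt G a then d ?x q else 0)"
    using dv[OF tV] short fin by (simp add: trunc_def pmul_vert_idem_right)
  show ?thesis using 1 2 nz by (auto split: if_splits)
qed

lemma trunc_der_eq_zero_on_generators:
  fixes d :: "(('v,'e) path \<Rightarrow> 'k::field) \<Rightarrow> _"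
  assumes fq: "finite_quiver G" and d: "trunc_der G n d" and dv: "\<And>v. v \<in> verts G \<Longrightarrow> d (vert_idem v) = (\<lambda>_. 0)"
    and da: "\<And>a. a \<in> arcs G \<Longrightarrow> d (bas (apath G a)) = (\<lambda>_. 0)"
    and x: "x \<in> PA G"
  shows "d x = (\<lambda>_. 0)"
proof -
  have on_paths: "is_path G (v, l) \<Longrightarrow> d (bas (v, l)) = (\<lambda>_. 0)" for v l
  proof (induction l arbitrary: v)
    case Nil then show ?case using dv by (simp add: is_path_def)
  next
    case (Cons a l)
    note c = is_path_Cons[OF fq Cons.prems]
    have p1: "is_path G (v, [a])" using c by (auto simp: is_path_def)
    have eq: "bas (v, a # l) = pmul G (bas (v,[a])) (bas (qtgt G a, l))"
      by (simp add: pmul_bas_bas pend_def pjoin_def)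
    have "d (bas (v, a # l)) = (\<lambda>p. trunc n (pmul G (d (bas (v,[a]))) (bas (qtgt G a, l))) p +
                  trunc n (pmul G (bas (v,[a])) (d (bas (qtgt G a, l)))) p)"
      unfolding eq by (rule trunc_derD(5)[OF d bas_PA[OF p1] bas_PA[OF c(1)]])
    moreover have "d (bas (v,[a])) = (\<lambda>_. 0)" using da[OF c(2)] c(3) by (simp add: apath_def)
    ultimately show ?case using Cons.IH[OF c(1)] by simp
  qed
  from x show ?thesis
  proof (induction rule: PA_induct)
    case zero then show ?case by (rule trunc_der_zero[OF d])
  next
    case (bas c p) then show ?case using trunc_derD(4)[OF d bas_PA] on_paths[of "fst p" "snd p"] by simp
  next
    case (add y z) then show ?case using trunc_derD(3)[OF d] by simp
  qed
qed

definition inner_der :: "('v,'e) quiver \<Rightarrow> nat \<Rightarrow> ('v,'e) path \<Rightarrow> (('v,'e) path \<Rightarrow> 'k::field) \<Rightarrow> (('v,'e) path \<Rightarrow> 'k)" where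
  "inner_der G n s x = (\<lambda>p. trunc n (pmul G (bas s) x) p - trunc n (pmul G x (bas s)) p)"

lemma inner_der_eq_trunc:
  "inner_der G n s x = trunc n (\<lambda>p. pmul G (bas s) x p - pmul G x (bas s) p)"
  by (simp add: inner_der_def trunc_diff)

lemma trunc_der_inner_der:
  assumes s: "is_path G s"
  shows "trunc_der G n (inner_der G n s :: _ \<Rightarrow> _ \<Rightarrow> 'k::field)"
  unfolding inner_der_eq_trunc[abs_def]
proof (rule trunc_der_trunc_comp)
  have fs: "finite (supp (bas s :: _ \<Rightarrow> 'k))" by simp
  fix x y :: "_ \<Rightarrow> 'k" assume x: "x \<in> PA G" and y: "y \<in> PA G"
  have fx: "finite (supp x)" and fy: "finite (supp y)" using x y by (auto intro: PA_finite)
  show "(\<lambda>p. pmul G (bas s) (\<lambda>p. x p + y p) p - pmul G (\<lambda>p. x p + y p) (bas s) p) =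
      (\<lambda>p. (pmul G (bas s) x p - pmul G x (bas s) p) + (pmul G (bas s) y p - pmul G y (bas s) p))"
    using fx fy fs by (simp add: pmul_add_left pmul_add_right algebra_simps)
  show "(\<lambda>p. pmul G (bas s) (pmul G x y) p - pmul G (pmul G x y) (bas s) p) =
      (\<lambda>p. pmul G (\<lambda>p. pmul G (bas s) x p - pmul G x (bas s) p) y p +
           pmul G x (\<lambda>p. pmul G (bas s) y p - pmul G y (bas s) p) p)"
    using fx fy fs pmul_assoc[OF fs fx fy, of G] pmul_assoc[OF fx fs fy, of G] pmul_assoc[OF fx fy fs, of G]
    by (simp add: pmul_diff_left pmul_diff_right finite_supp_pmul)
next
  fix x :: "_ \<Rightarrow> 'k" assume x: "x \<in> PA G"
  show "(\<lambda>p. pmul G (bas s) x p - pmul G x (bas s) p) \<in> PA G"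
    using x s by (intro diff_PA pmul_PA bas_PA)
  fix c show "(\<lambda>p. pmul G (bas s) (\<lambda>p. c * x p) p - pmul G (\<lambda>p. c * x p) (bas s) p) =
      (\<lambda>p. c * (pmul G (bas s) x p - pmul G x (bas s) p))"
    by (simp add: pmul_smul_left pmul_smul_right right_diff_distrib)
  assume "trunc n x = (\<lambda>_. 0)"
  then show "trunc n (\<lambda>p. pmul G (bas s) x p - pmul G x (bas s) p) = (\<lambda>_. 0)"
    using trunc_pmul_right[of "bas s" x n G] trunc_pmul_left[of x "bas s" n G] PA_finite[OF x]
    by (simp add: trunc_diff)
qed

lemma inner_der_vert_idem:
  "inner_der G n s (vert_idem w) = (\<lambda>q. (if q = s \<and> plen s < n then (if pend G s = w then 1 else 0) - (if fst s = w then 1 else 0) else 0) :: 'k::field)"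
proof -
  have h1: "pmul G (bas s) (vert_idem w) = (if pend G s = w then bas s else (\<lambda>_. 0 :: 'k))"
    by (simp add: pmul_bas_bas pjoin_def)
  have h2: "pmul G (vert_idem w) (bas s) = (if fst s = w then bas s else (\<lambda>_. 0 :: 'k))"
    by (cases s) (auto simp: pmul_bas_bas pjoin_def pend_def)
  show ?thesis unfolding inner_der_def h1 h2 by (auto simp: trunc_def bas_def fun_eq_iff)
qed

lemma Dinner_bas_Diff:
  fixes s :: "('v,'e) path"
  assumes fq: "finite_quiver G" and sp: "is_path G s" and sn: "plen s < n"
  shows "Dinner G n (coset G n (bas s) :: ('v,'e,'k::field) qelem) \<in> Diff G n"
    and canon_Dinner_bas: "X \<in> QA G n \<Longrightarrow> canon n (Dinner G n (coset G n (bas s)) X) = inner_der G n s (canon n (X :: ('v,'e,'k) qelem))"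
proof -
  let ?S = "coset G n (bas s) :: ('v,'e,'k) qelem"
  have SQ: "?S \<in> QA G n" using sp by (simp add: coset_QA bas_PA)
  have qS: "canon n ?S = bas s" using sp sn by (simp add: canon_coset[OF fq] bas_PA trunc_bas_short)
  have v: "canon n (Dinner G n ?S X) = inner_der G n s (canon n X)" "Dinner G n ?S X \<in> QA G n"
    if X: "X \<in> QA G n" for X :: "('v,'e,'k) qelem"
  proof -
    have "Dinner G n ?S X = qadd G n (qmul G n ?S X) (qsmul G n (-1) (qmul G n X ?S))"
      using X by (simp add: Dinner_def)
    then show "canon n (Dinner G n ?S X) = inner_der G n s (canon n X)" "Dinner G n ?S X \<in> QA G n"
      using X SQ qS by (simp_all add: canon_qadd[OF fq] canon_qsmul[OF fq] canon_qmul[OF fq] qmul_QA[OF fq]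
          qsmul_QA[OF fq] qadd_QA[OF fq] inner_der_def)
  qed
  show "Dinner G n ?S \<in> Diff G n"
  proof (rule trunc_der_imp_Diff[OF fq trunc_der_inner_der[OF sp]])
    show "Dinner G n ?S \<in> extensional (QA G n)" by (simp add: Dinner_def)
  qed (simp_all add: v)
  show "X \<in> QA G n \<Longrightarrow> canon n (Dinner G n ?S X) = inner_der G n s (canon n X)" using v by blast
qed

section \<open>The derivations D_{r,s}\<close>

fun Drs_path :: "('v,'e) quiver \<Rightarrow> 'e \<Rightarrow> ('v,'e) path \<Rightarrow> 'v \<Rightarrow> 'e list \<Rightarrow> (('v,'e) path \<Rightarrow> 'k::field)" where
  "Drs_path G r s v [] = (\<lambda>_. 0)"
| "Drs_path G r s v (a # l) = (\<lambda>p. pmul G (if a = r then bas s else (\<lambda>_. 0)) (bas (qtgt G a, l)) p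
                              + pmul G (bas (v,[a])) (Drs_path G r s (qtgt G a) l) p)"

lemma isDrs_zero:
  assumes "isDrs G n r s D"
  shows "D (\<lambda>_. 0) = qzero G n"
proof -
  have sm: "\<forall>c. \<forall>x\<in>PA G. D (\<lambda>p. c * x p) = qsmul G n c (D x)" using assms by (simp add: isDrs_def)
  have "D (\<lambda>p. 0 * (\<lambda>_. 0) p) = qsmul G n 0 (D (\<lambda>_. 0))"
    using sm[rule_format, where c=0 and x="\<lambda>_. 0"] by simp
  then show ?thesis by (simp add: qsmul_def qzero_def)
qed

lemma isDrs_uniq:
  fixes D1 D2 :: "(('v,'e) path \<Rightarrow> 'k::field) \<Rightarrow> ('v,'e,'k) qelem"
  assumes fq: "finite_quiver G" and D1: "isDrs G n r s D1" and D2: "isDrs G n r s D2"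
  shows "D1 = D2"
proof (rule ext)
  have D_add: "\<And>D x y. isDrs G n r s D \<Longrightarrow> x \<in> PA G \<Longrightarrow> y \<in> PA G \<Longrightarrow> D (\<lambda>p. x p + y p) = qadd G n (D x) (D y)"
    and D_smul: "\<And>D c x. isDrs G n r s D \<Longrightarrow> x \<in> PA G \<Longrightarrow> D (\<lambda>p. c * x p) = qsmul G n c (D x)"
    and D_mul: "\<And>D x y. isDrs G n r s D \<Longrightarrow> x \<in> PA G \<Longrightarrow> y \<in> PA G \<Longrightarrow>
        D (pmul G x y) = qadd G n (qmul G n (D x) (coset G n y)) (qmul G n (coset G n x) (D y))"
    by (simp_all add: isDrs_def)
  have on_paths: "is_path G (v, l) \<Longrightarrow> D1 (bas (v, l)) = D2 (bas (v, l))" for v l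
  proof (induction l arbitrary: v)
    case Nil then show ?case using D1 D2 by (simp add: isDrs_def is_path_def vpath_def)
  next
    case (Cons a l)
    note c = is_path_Cons[OF fq Cons.prems]
    have p1: "is_path G (v,[a])" using c by (auto simp: is_path_def)
    have eq: "bas (v, a # l) = (pmul G (bas (v,[a])) (bas (qtgt G a, l)) :: _ \<Rightarrow> 'k)"
      by (simp add: pmul_bas_bas pend_def pjoin_def)
    have a1: "D1 (bas (v,[a])) = D2 (bas (v,[a]))"
      using D1 D2 c(2,3) unfolding isDrs_def apath_def by (cases "a = r") auto
    show ?case unfolding eq
      using D_mul[OF D1 bas_PA[OF p1] bas_PA[OF c(1)]] D_mul[OF D2 bas_PA[OF p1] bas_PA[OF c(1)]]
        a1 Cons.IH[OF c(1)] by simp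
  qed
  fix x :: "_ \<Rightarrow> 'k"
  show "D1 x = D2 x"
  proof (cases "x \<in> PA G")
    case False
    then show ?thesis using D1 D2 by (simp add: isDrs_def extensional_def)
  next
    case True
    then show ?thesis
    proof (induction rule: PA_induct)
      case zero then show ?case using isDrs_zero[OF D1] isDrs_zero[OF D2] by simp
    next
      case (bas c p) then show ?case
        using D_smul[OF D1 bas_PA] D_smul[OF D2 bas_PA] on_paths[of "fst p" "snd p"] by simp
    next
      case (add y z) then show ?case using D_add[OF D1] D_add[OF D2] by simp
    qed
  qed
qed

definition Drs_lin :: "('v,'e) quiver \<Rightarrow> 'e \<Rightarrow> ('v,'e) path \<Rightarrow> (('v,'e) path \<Rightarrow> 'k::field)
                     \<Rightarrow> (('v,'e) path \<Rightarrow> 'k)" where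
  "Drs_lin G r s x = (\<lambda>w. \<Sum>p\<in>supp x. x p * Drs_path G r s (fst p) (snd p) w)"

definition Drs_trunc :: "('v,'e) quiver \<Rightarrow> nat \<Rightarrow> 'e \<Rightarrow> ('v,'e) path \<Rightarrow> (('v,'e) path \<Rightarrow> 'k::field)
                       \<Rightarrow> (('v,'e) path \<Rightarrow> 'k)" where
  "Drs_trunc G n r s x = trunc n (Drs_lin G r s x)"

locale parallel_arc =
  fixes G :: "('v,'e) quiver" and r :: 'e and s :: "('v,'e) path"
  assumes fq: "finite_quiver G" and rA: "r \<in> arcs G" and sp: "is_path G s"
    and par: "parallel G r s" and sl: "1 \<le> plen s"
begin

lemma Drs_path_PA: "is_path G (v, l) \<Longrightarrow> (Drs_path G r s v l :: _ \<Rightarrow> 'k::field) \<in> PA G"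
proof (induction l arbitrary: v)
  case Nil then show ?case by simp
next
  case (Cons a l)
  note c = is_path_Cons[OF fq Cons.prems]
  have p1: "is_path G (v,[a])" using c by (auto simp: is_path_def)
  have "(if a = r then bas s else (\<lambda>_. 0)) \<in> (PA G :: (_ \<Rightarrow> 'k) set)" using sp by (auto intro: bas_PA)
  then show ?case using Cons.IH[OF c(1)] c p1
    by (simp only: Drs_path.simps) (intro add_PA pmul_PA bas_PA; simp)
qed

text \<open>As s is not a vertex, D_{r,s} never shortens a path; hence it preserves k^n\<Gamma>.\<close>
lemma Drs_path_supp:
  "is_path G (v, l) \<Longrightarrow> (Drs_path G r s v l :: _ \<Rightarrow> 'k::field) q \<noteq> 0 \<Longrightarrow>
     fst q = v \<and> pend G q = pend G (v, l) \<and> length l \<le> plen q"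
proof (induction l arbitrary: v q)
  case Nil then show ?case by simp
next
  case (Cons a l)
  note c = is_path_Cons[OF fq Cons.prems(1)]
  from Cons.prems(2) have
    "pmul G (if a = r then bas s else (\<lambda>_. 0)) (bas (qtgt G a, l)) q \<noteq> (0::'k) \<or>
     pmul G (bas (v,[a])) (Drs_path G r s (qtgt G a) l) q \<noteq> (0::'k)"
    by auto
  then show ?case
  proof
    assume "pmul G (if a = r then bas s else (\<lambda>_. 0)) (bas (qtgt G a, l)) q \<noteq> (0::'k)"
    then obtain q1 r1 where h: "(if a = r then bas s else (\<lambda>_. 0)) q1 \<noteq> (0::'k)" "bas (qtgt G a, l) r1 \<noteq> (0::'k)"
      "pend G q1 = fst r1" "pjoin q1 r1 = q" using pmul_nonzero_factors by blast
    then have ar: "a = r" and q1: "q1 = s" and r1: "r1 = (qtgt G a, l)"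
      by (auto simp: bas_def split: if_splits)
    have "fst q = v" using h(4) q1 par ar c by (auto simp: parallel_def pstart_def)
    moreover have "pend G q = pend G (v, a # l)"
    proof -
      have "pend G q = pend G r1" using pend_pjoin[OF h(3)] h(4) by simp
      then show ?thesis using r1 by (simp add: pend_Cons)
    qed
    moreover have "length (a # l) \<le> plen q" using h(4) q1 r1 sl by (auto simp: plen_def)
    ultimately show ?thesis by blast
  next
    assume "pmul G (bas (v,[a])) (Drs_path G r s (qtgt G a) l) q \<noteq> (0::'k)"
    then obtain q1 r1 where h: "bas (v,[a]) q1 \<noteq> (0::'k)" "Drs_path G r s (qtgt G a) l r1 \<noteq> (0::'k)"
      "pend G q1 = fst r1" "pjoin q1 r1 = q" using pmul_nonzero_factors by blast
    then have q1: "q1 = (v,[a])" by (auto simp: bas_def split: if_splits)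
    have IH: "fst r1 = qtgt G a \<and> pend G r1 = pend G (qtgt G a, l) \<and> length l \<le> plen r1"
      using Cons.IH[OF c(1) h(2)] .
    show ?thesis using h(3,4) q1 IH by (auto simp: pend_pjoin pend_Cons plen_def)
  qed
qed

lemma Drs_path_fin: "is_path G (v, l) \<Longrightarrow> finite (supp (Drs_path G r s v l :: _ \<Rightarrow> 'k::field))"
  by (rule PA_finite[OF Drs_path_PA])

lemma Drs_path_leibniz:
  fixes l m :: "'e list"
  assumes "is_path G (v, l)" "is_path G (u, m)" "pend G (v, l) = u"
  shows "(Drs_path G r s v (l @ m) :: _ \<Rightarrow> 'k::field) =
     (\<lambda>w. pmul G (Drs_path G r s v l) (bas (u, m)) w + pmul G (bas (v, l)) (Drs_path G r s u m) w)"
  using assms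
proof (induction l arbitrary: v)
  case Nil
  have "pmul G (bas (v, [])) (Drs_path G r s u m) w = (Drs_path G r s u m :: _ \<Rightarrow> 'k) w" for w
  proof -
    have uv: "u = v" using Nil by (simp add: pend_def)
    have "pmul G (bas (v, [])) (Drs_path G r s u m) w = (if fst w = v then (Drs_path G r s u m :: _ \<Rightarrow> 'k) w else 0)"
      by (rule pmul_vert_idem_left[OF Drs_path_fin[OF Nil(2)]])
    then show ?thesis using Drs_path_supp[OF Nil(2), of w] uv by auto
  qed
  then show ?case using Nil by (simp add: pend_def fun_eq_iff)
next
  case (Cons a l)
  note c = is_path_Cons[OF fq Cons.prems(1)]
  let ?S = "(if a = r then bas s else (\<lambda>_. 0)) :: _ \<Rightarrow> 'k"
  let ?t = "qtgt G a"
  have fS: "finite (supp ?S)" by (cases "a = r") (simp_all add: supp_def[of "\<lambda>_. 0"])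
  have fd: "finite (supp (Drs_path G r s ?t l :: _ \<Rightarrow> 'k))" using Drs_path_fin[OF c(1)] .
  have fdm: "finite (supp (Drs_path G r s u m :: _ \<Rightarrow> 'k))" using Drs_path_fin[OF Cons.prems(2)] .
  have pe: "pend G (?t, l) = u" using Cons.prems(3) by (simp add: pend_Cons)
  have IH: "(Drs_path G r s ?t (l @ m) :: _ \<Rightarrow> 'k) =
     (\<lambda>w. pmul G (Drs_path G r s ?t l) (bas (u, m)) w + pmul G (bas (?t, l)) (Drs_path G r s u m) w)"
    using Cons.IH[OF c(1) Cons.prems(2) pe] .
  have b1: "bas (?t, l @ m) = (pmul G (bas (?t, l)) (bas (u, m)) :: _ \<Rightarrow> 'k)"
    using pe by (simp add: pmul_bas_bas pjoin_def)
  have b2: "bas (v, a # l) = (pmul G (bas (v, [a])) (bas (?t, l)) :: _ \<Rightarrow> 'k)"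
    by (simp add: pmul_bas_bas pjoin_def pend_def)
  have "(Drs_path G r s v ((a # l) @ m) :: _ \<Rightarrow> 'k) =
     (\<lambda>p. pmul G ?S (pmul G (bas (?t, l)) (bas (u, m))) p +
          pmul G (bas (v,[a])) (\<lambda>w. pmul G (Drs_path G r s ?t l) (bas (u, m)) w + pmul G (bas (?t, l)) (Drs_path G r s u m) w) p)"
    using b1 IH by simp
  also have "\<dots> = (\<lambda>p. pmul G (pmul G ?S (bas (?t, l))) (bas (u, m)) p +
          (pmul G (pmul G (bas (v,[a])) (Drs_path G r s ?t l)) (bas (u, m)) p +
           pmul G (pmul G (bas (v,[a])) (bas (?t, l))) (Drs_path G r s u m) p))"
    using fS fd fdm
    by (simp add: pmul_add_right finite_supp_pmul pmul_assoc)
  also have "\<dots> = (\<lambda>w. pmul G (Drs_path G r s v (a # l)) (bas (u, m)) w + pmul G (bas (v, a # l)) (Drs_path G r s u m) w)"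
    using fS fd fdm b2 by (simp add: pmul_add_left finite_supp_pmul add.assoc)
  finally show ?case .
qed

lemma Drs_lin_alt:
  assumes "finite A" "supp x \<subseteq> A"
  shows "Drs_lin G r s x = (\<lambda>w. \<Sum>p\<in>A. x p * Drs_path G r s (fst p) (snd p) w)"
  unfolding Drs_lin_def by (rule ext, rule sum.mono_neutral_left) (use assms in \<open>auto simp: supp_def\<close>)

lemma Drs_lin_PA: "x \<in> PA G \<Longrightarrow> Drs_lin G r s x \<in> PA G"
  unfolding Drs_lin_def
  by (intro sum_PA smul_PA Drs_path_PA) (auto simp: PA_def supp_def)

lemma Drs_lin_add: "x \<in> PA G \<Longrightarrow> y \<in> PA G \<Longrightarrow> Drs_lin G r s (\<lambda>p. x p + y p) = (\<lambda>w. Drs_lin G r s x w + Drs_lin G r s y w)"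
proof -
  assume x: "x \<in> PA G" and y: "y \<in> PA G"
  let ?A = "supp x \<union> supp y"
  have fA: "finite ?A" using x y by (auto simp: PA_def)
  show ?thesis
    using Drs_lin_alt[OF fA, of x] Drs_lin_alt[OF fA, of y] Drs_lin_alt[OF fA, of "\<lambda>p. x p + y p"] supp_add[of x y]
    by (simp add: sum.distrib distrib_right)
qed

lemma Drs_lin_smul: "x \<in> PA G \<Longrightarrow> Drs_lin G r s (\<lambda>p. c * x p) = (\<lambda>w. c * Drs_lin G r s x w)"
proof -
  assume x: "x \<in> PA G"
  have fA: "finite (supp x)" using x by (auto simp: PA_def)
  show ?thesis
    using Drs_lin_alt[OF fA, of x] Drs_lin_alt[OF fA, of "\<lambda>p. c * x p"] supp_smul[of c x]
    by (simp add: sum_distrib_left mult.assoc)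
qed

lemma Drs_lin_zero: "Drs_lin G r s (\<lambda>_. 0) = (\<lambda>_. 0)" by (simp add: Drs_lin_def supp_def)

lemma Drs_lin_bas: "Drs_lin G r s (bas p) = Drs_path G r s (fst p) (snd p)"
  unfolding Drs_lin_def supp_bas by (simp add: bas_def)

lemma Drs_lin_pmul_bas:
  assumes a: "is_path G a" and b: "is_path G b"
  shows "Drs_lin G r s (pmul G (bas a) (bas b)) =
    (\<lambda>w. pmul G (Drs_path G r s (fst a) (snd a)) (bas b) w + pmul G (bas a) (Drs_path G r s (fst b) (snd b)) w :: 'k::field)"
proof (cases "pend G a = fst b")
  case True
  have "Drs_lin G r s (pmul G (bas a) (bas b)) = (Drs_path G r s (fst a) (snd a @ snd b) :: _ \<Rightarrow> 'k)"
    using True by (simp add: pmul_bas_bas Drs_lin_bas)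
  also have "\<dots> = (\<lambda>w. pmul G (Drs_path G r s (fst a) (snd a)) (bas (fst b, snd b)) w +
                    pmul G (bas (fst a, snd a)) (Drs_path G r s (fst b) (snd b)) w)"
    by (rule Drs_path_leibniz) (use a b True in auto)
  finally show ?thesis by simp
next
  case False
  have z1: "pmul G (Drs_path G r s (fst a) (snd a)) (bas b) w = (0::'k)" for w
  proof (rule ccontr)
    assume "pmul G (Drs_path G r s (fst a) (snd a)) (bas b) w \<noteq> (0::'k)"
    then obtain q1 r1 where "Drs_path G r s (fst a) (snd a) q1 \<noteq> (0::'k)" "bas b r1 \<noteq> (0::'k)" "pend G q1 = fst r1"
      using pmul_nonzero_factors by blast
    then show False using Drs_path_supp[of "fst a" "snd a" q1] a False by (auto simp: bas_def split: if_splits)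
  qed
  have z2: "pmul G (bas a) (Drs_path G r s (fst b) (snd b)) w = (0::'k)" for w
  proof (rule ccontr)
    assume "pmul G (bas a) (Drs_path G r s (fst b) (snd b)) w \<noteq> (0::'k)"
    then obtain q1 r1 where "bas a q1 \<noteq> (0::'k)" "Drs_path G r s (fst b) (snd b) r1 \<noteq> (0::'k)" "pend G q1 = fst r1"
      using pmul_nonzero_factors by blast
    then show False using Drs_path_supp[of "fst b" "snd b" r1] b False by (auto simp: bas_def split: if_splits)
  qed
  show ?thesis using False z1 z2 by (simp add: pmul_bas_bas Drs_lin_zero)
qed

lemma Drs_lin_leibniz_bas_left:
  assumes a: "is_path G a" and y: "y \<in> PA G"
  shows "Drs_lin G r s (pmul G (bas a) y) =
    (\<lambda>w. pmul G (Drs_lin G r s (bas a)) y w + pmul G (bas a) (Drs_lin G r s y) w :: 'k::field)"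
  using y
proof (induction rule: PA_induct)
  case zero then show ?case by (simp add: Drs_lin_zero)
next
  case (bas c b)
  have bP: "bas b \<in> PA G" "pmul G (bas a) (bas b) \<in> PA G" using a bas by (auto intro: bas_PA pmul_PA)
  show ?case
    using Drs_lin_pmul_bas[OF a bas, where 'k='k] Drs_lin_smul[OF bP(2), of c] Drs_lin_smul[OF bP(1), of c]
    by (simp add: pmul_smul_right Drs_lin_bas algebra_simps)
next
  case (add y z)
  have P: "Drs_lin G r s (bas a) \<in> PA G" "Drs_lin G r s y \<in> PA G" "Drs_lin G r s z \<in> PA G"
    using a add by (auto intro: Drs_lin_PA bas_PA)
  have "pmul G (bas a) (\<lambda>p. y p + z p) = (\<lambda>p. pmul G (bas a) y p + pmul G (bas a) z p)"
    using add by (intro pmul_add_right) (auto intro: PA_finite)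
  moreover have "pmul G (Drs_lin G r s (bas a)) (\<lambda>p. y p + z p) =
      (\<lambda>p. pmul G (Drs_lin G r s (bas a)) y p + pmul G (Drs_lin G r s (bas a)) z p)"
    using add P by (intro pmul_add_right) (auto intro: PA_finite)
  moreover have "pmul G (bas a) (Drs_lin G r s (\<lambda>p. y p + z p)) =
      (\<lambda>p. pmul G (bas a) (Drs_lin G r s y) p + pmul G (bas a) (Drs_lin G r s z) p)"
    using add P by (simp add: Drs_lin_add pmul_add_right PA_finite)
  ultimately show ?case
    using add a by (simp add: Drs_lin_add pmul_PA bas_PA algebra_simps)
qed

lemma Drs_lin_leibniz:
  assumes x: "x \<in> PA G" and y: "y \<in> PA G"
  shows "Drs_lin G r s (pmul G x y) = (\<lambda>w. pmul G (Drs_lin G r s x) y w + pmul G x (Drs_lin G r s y) w :: 'k::field)"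
  using x
proof (induction rule: PA_induct)
  case zero then show ?case by (simp add: Drs_lin_zero)
next
  case (bas c a)
  have P: "bas a \<in> PA G" "pmul G (bas a) y \<in> PA G" using bas y by (auto intro: bas_PA pmul_PA)
  show ?case
    using Drs_lin_leibniz_bas_left[OF bas y] Drs_lin_smul[OF P(2), of c] Drs_lin_smul[OF P(1), of c]
    by (simp add: pmul_smul_left algebra_simps)
next
  case (add x1 x2)
  have P: "Drs_lin G r s x1 \<in> PA G" "Drs_lin G r s x2 \<in> PA G" "Drs_lin G r s y \<in> PA G"
    using add y by (auto intro: Drs_lin_PA)
  have "pmul G (\<lambda>p. x1 p + x2 p) y = (\<lambda>p. pmul G x1 y p + pmul G x2 y p)"
    using add y by (intro pmul_add_left) (auto intro: PA_finite)
  moreover have "pmul G (\<lambda>p. x1 p + x2 p) (Drs_lin G r s y) =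
      (\<lambda>p. pmul G x1 (Drs_lin G r s y) p + pmul G x2 (Drs_lin G r s y) p)"
    using add P by (intro pmul_add_left) (auto intro: PA_finite)
  moreover have "pmul G (Drs_lin G r s (\<lambda>p. x1 p + x2 p)) y =
      (\<lambda>p. pmul G (Drs_lin G r s x1) y p + pmul G (Drs_lin G r s x2) y p)"
    using add P y by (simp add: Drs_lin_add pmul_add_left PA_finite)
  ultimately show ?case
    using add y by (simp add: Drs_lin_add pmul_PA algebra_simps)
qed

lemma isDrs_coset_Drs_lin:
  "isDrs G n r s (restrict (\<lambda>x. coset G n (Drs_lin G r s x)) (PA G) :: _ \<Rightarrow> ('v,'e,'k::field) qelem)"
  (is "isDrs G n r s ?D")
  unfolding isDrs_def
proof (intro conjI ballI allI impI)
  show "?D \<in> extensional (PA G)" by simp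
  fix x :: "_ \<Rightarrow> 'k" assume x: "x \<in> PA G"
  show "?D x \<in> QA G n" using x by (simp add: coset_QA Drs_lin_PA)
  fix c show "?D (\<lambda>p. c * x p) = qsmul G n c (?D x)"
    using x by (simp add: smul_PA Drs_lin_smul coset_smul[OF fq] Drs_lin_PA)
next
  fix x y :: "_ \<Rightarrow> 'k" assume x: "x \<in> PA G" and y: "y \<in> PA G"
  show "?D (\<lambda>p. x p + y p) = qadd G n (?D x) (?D y)"
    using x y by (simp add: add_PA Drs_lin_add coset_add[OF fq] Drs_lin_PA)
  show "?D (pmul G x y) = qadd G n (qmul G n (?D x) (coset G n y)) (qmul G n (coset G n x) (?D y))"
    using x y by (simp add: pmul_PA Drs_lin_leibniz coset_add[OF fq] coset_mul[OF fq] Drs_lin_PA)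
next
  have "Drs_lin G r s (bas (apath G r)) = (bas s :: _ \<Rightarrow> 'k)"
    using par by (simp add: Drs_lin_bas apath_def pmul_bas_bas pjoin_def parallel_def)
  then show "?D (bas (apath G r)) = coset G n (bas s)" using apath_is_path[OF fq rA] by (simp add: bas_PA)
next
  fix a assume a: "a \<in> arcs G" "a \<noteq> r"
  then show "?D (bas (apath G a)) = qzero G n"
    using apath_is_path[OF fq a(1)] by (simp add: bas_PA qzero_def Drs_lin_bas apath_def)
next
  fix v assume "v \<in> verts G"
  then show "?D (bas (vpath v)) = qzero G n"
    by (simp add: bas_PA qzero_def vpath_def is_path_def Drs_lin_bas)
qed

lemma Drs_eq_restrict:
  "Drs G n r s = (restrict (\<lambda>x. coset G n (Drs_lin G r s x)) (PA G) :: _ \<Rightarrow> ('v,'e,'k::field) qelem)"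
  unfolding Drs_def by (rule the_equality) (fact isDrs_coset_Drs_lin, rule isDrs_uniq[OF fq _ isDrs_coset_Drs_lin])

lemma Drs_eq_coset: "x \<in> PA G \<Longrightarrow> Drs G n r s x = coset G n (Drs_lin G r s (x :: _ \<Rightarrow> 'k::field))"
  by (simp add: Drs_eq_restrict)

lemma Drs_lin_long:
  fixes x :: "_ \<Rightarrow> 'k::field"
  assumes x: "x \<in> PA G" and z: "\<And>p. plen p < n \<Longrightarrow> x p = 0"
  shows "trunc n (Drs_lin G r s x) = (\<lambda>_. 0)"
proof
  fix w
  show "trunc n (Drs_lin G r s x) w = 0"
  proof (cases "plen w < n")
    case True
    have zz: "x p * Drs_path G r s (fst p) (snd p) w = 0" if "p \<in> supp x" for p
    proof (rule ccontr)
      assume "x p * Drs_path G r s (fst p) (snd p) w \<noteq> 0"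
      then have nz: "x p \<noteq> 0" "Drs_path G r s (fst p) (snd p) w \<noteq> (0::'k)" by auto
      have "is_path G (fst p, snd p)" using x nz by (auto simp: PA_def supp_def)
      then have "length (snd p) \<le> plen w" using Drs_path_supp[OF _ nz(2)] by blast
      then have "plen p < n" using True by (simp add: plen_def)
      then show False using z nz by simp
    qed
    have "(\<Sum>p\<in>supp x. x p * Drs_path G r s (fst p) (snd p) w) = 0" by (rule sum.neutral) (use zz in blast)
    then have "Drs_lin G r s x w = 0" by (simp add: Drs_lin_def)
    then show ?thesis by (simp add: trunc_def)
  qed (simp add: trunc_def)
qed

lemma Drs_vanishes_on_knG:
  assumes x: "(x :: _ \<Rightarrow> 'k::field) \<in> knG G n"
  shows "Drs G n r s x = qzero G n"
proof -
  have xx: "x \<in> PA G" "trunc n x = (\<lambda>_. 0)" using x knG_iff[OF fq] by blast+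
  have z: "x p = 0" if "plen p < n" for p using fun_cong[OF xx(2), of p] that by (simp add: trunc_def)
  have "trunc n (Drs_lin G r s x) = (\<lambda>_. 0)"
    by (rule Drs_lin_long[OF xx(1) z])
  then have "coset G n (Drs_lin G r s x) = coset G n (\<lambda>_. 0)"
    using coset_eq_iff[OF fq Drs_lin_PA[OF xx(1)] zero_PA] by simp
  then show ?thesis using Drs_eq_coset[OF xx(1)] by (simp add: qzero_def)
qed

lemma trunc_der_Drs_trunc: "trunc_der G n (Drs_trunc G n r s :: _ \<Rightarrow> _ \<Rightarrow> 'k::field)"
  unfolding Drs_trunc_def[abs_def]
proof (rule trunc_der_trunc_comp[OF Drs_lin_PA Drs_lin_add Drs_lin_smul Drs_lin_leibniz])
  fix x :: "_ \<Rightarrow> 'k" assume x: "x \<in> PA G" and t: "trunc n x = (\<lambda>_. 0)"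
  have "x p = 0" if "plen p < n" for p using fun_cong[OF t, of p] that by (simp add: trunc_def)
  then show "trunc n (Drs_lin G r s x) = (\<lambda>_. 0)" by (rule Drs_lin_long[OF x])
qed

lemma Drs_bar_Diff: "(Drs_bar G n r s :: ('v,'e,'k::field) qelem \<Rightarrow> _) \<in> Diff G n"
  and canon_Drs_bar: "X \<in> QA G n \<Longrightarrow> canon n (Drs_bar G n r s X) = Drs_trunc G n r s (canon n (X :: ('v,'e,'k) qelem))"
proof -
  have v: "canon n (Drs_bar G n r s X) = Drs_trunc G n r s (canon n X)" "Drs_bar G n r s X \<in> QA G n"
    if X: "X \<in> QA G n" for X :: "('v,'e,'k) qelem"
  proof -
    have rX: "rep X \<in> PA G" using rep_PA[OF fq X] .
    have "Drs_bar G n r s X = coset G n (Drs_lin G r s (rep X))"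
      using X rX by (simp add: Drs_bar_def Drs_eq_coset)
    then have e: "canon n (Drs_bar G n r s X) = Drs_trunc G n r s (rep X)" "Drs_bar G n r s X \<in> QA G n"
      using rX by (simp_all add: canon_coset[OF fq] Drs_lin_PA Drs_trunc_def coset_QA)
    have "Drs_trunc G n r s (rep X) = Drs_trunc G n r s (canon n X)"
      by (rule trunc_derD(6)[OF trunc_der_Drs_trunc rX canon_PA[OF fq X]]) (simp add: canon_def)
    then show "canon n (Drs_bar G n r s X) = Drs_trunc G n r s (canon n X)" using e by simp
    show "Drs_bar G n r s X \<in> QA G n" using e by simp
  qed
  show "(Drs_bar G n r s :: ('v,'e,'k) qelem \<Rightarrow> _) \<in> Diff G n"
  proof (rule trunc_der_imp_Diff[OF fq trunc_der_Drs_trunc])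
    show "(Drs_bar G n r s :: ('v,'e,'k) qelem \<Rightarrow> _) \<in> extensional (QA G n)" by (simp add: Drs_bar_def)
  qed (simp_all add: v)
  show "X \<in> QA G n \<Longrightarrow> canon n (Drs_bar G n r s X) = Drs_trunc G n r s (canon n X)" using v by blast
qed

lemma Drs_trunc_vert_idem: "Drs_trunc G n r s (vert_idem v) = (\<lambda>_. 0 :: 'k::field)"
  by (simp add: Drs_trunc_def Drs_lin_bas)

lemma Drs_trunc_arc: "plen s < n \<Longrightarrow> Drs_trunc G n r s (bas (apath G a)) = (if a = r then bas s else (\<lambda>_. 0 :: 'k::field))"
proof -
  assume sn: "plen s < n"
  have pe: "pend G s = qtgt G r" using par by (simp add: parallel_def)
  show ?thesis using pe sn
    by (simp add: Drs_trunc_def Drs_lin_bas apath_def pmul_bas_bas pjoin_def trunc_bas_short)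
qed

end

definition nonclosed_paths :: "('v,'e) quiver \<Rightarrow> nat \<Rightarrow> ('v,'e) path set" where
  "nonclosed_paths G n = {s. is_path G s \<and> plen s < n \<and> pend G s \<noteq> fst s}"

definition parallel_pairs :: "('v,'e) quiver \<Rightarrow> nat \<Rightarrow> ('e \<times> ('v,'e) path) set" where
  "parallel_pairs G n = {(r, s). r \<in> arcs G \<and> is_path G s \<and> 1 \<le> plen s \<and> plen s < n \<and> parallel G r s}"

lemma is_Diff_basisI:
  assumes "B \<subseteq> Diff G n"
    and "\<And>\<delta>. \<delta> \<in> Diff G n \<Longrightarrow> \<exists>S c. finite S \<and> S \<subseteq> B \<and>
           (\<forall>X\<in>QA G n. \<delta> X = qsum G n S (\<lambda>D. qsmul G n (c D) (D X)))"
    and "\<And>S c D. finite S \<Longrightarrow> S \<subseteq> B \<Longrightarrow>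
           \<forall>X\<in>QA G n. qsum G n S (\<lambda>D. qsmul G n (c D) (D X)) = qzero G n \<Longrightarrow> D \<in> S \<Longrightarrow> c D = 0"
  shows "is_Diff_basis G n B"
  using assms unfolding is_Diff_basis_def by blast

lemma finite_nonclosed_paths: "finite_quiver G \<Longrightarrow> finite (nonclosed_paths G n)"
  unfolding nonclosed_paths_def by (rule finite_subset[OF _ finite_paths_shorter]) auto

lemma finite_parallel_pairs:
  assumes "finite_quiver G"
  shows "finite (parallel_pairs G n)"
proof (rule finite_subset)
  show "parallel_pairs G n \<subseteq> arcs G \<times> {p. is_path G p \<and> plen p < n}"
    by (auto simp: parallel_pairs_def)
  show "finite (arcs G \<times> {p. is_path G p \<and> plen p < n})"
    using assms finite_paths_shorter[OF assms] by (simp add: finite_quiver_def)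
qed

lemma parallel_pairs_parallel_arc:
  "finite_quiver G \<Longrightarrow> (r, s) \<in> parallel_pairs G n \<Longrightarrow> parallel_arc G r s"
  by (simp add: parallel_pairs_def parallel_arc_def)

lemma B1_eq_image:
  "1 \<le> n \<Longrightarrow> B1 G n = (\<lambda>s. Dinner G n (coset G n (bas s))) ` nonclosed_paths G n"
proof -
  assume "1 \<le> n"
  then have "{s. is_path G s \<and> plen s \<le> n - 1 \<and> pend G s \<noteq> pstart s} = nonclosed_paths G n"
    by (auto simp: nonclosed_paths_def pstart_def)
  then show ?thesis unfolding B1_def setcompr_eq_image by simp
qed

lemma B2_eq_image: "B2 G n = (\<lambda>(r, s). Drs_bar G n r s) ` parallel_pairs G n"
  by (force simp: B2_def parallel_pairs_def)

lemma B2_memE: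
  assumes "D \<in> B2 G n"
  obtains a s where "(a, s) \<in> parallel_pairs G n" "D = Drs_bar G n a s"
proof -
  obtain i where "i \<in> parallel_pairs G n" "D = (\<lambda>(r, s). Drs_bar G n r s) i"
    using assms unfolding B2_eq_image by blast
  then show thesis using that by (cases i) simp
qed

lemma B1_B2_Diff:
  assumes fq: "finite_quiver G" and n: "1 \<le> n"
  shows "B1 G n \<union> B2 G n \<subseteq> (Diff G n :: (('v,'e,'k::field) qelem \<Rightarrow> _) set)"
  using Dinner_bas_Diff[OF fq] parallel_arc.Drs_bar_Diff[OF parallel_pairs_parallel_arc[OF fq]]
  by (auto simp: B1_eq_image[OF n] B2_eq_image nonclosed_paths_def)

subsection \<open>Spanning\<close>

lemma sum_inner_der_vert_idem:
  assumes "finite S"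
  shows "(\<Sum>s\<in>S. f s * inner_der G n s (vert_idem w) q) =
    (if q \<in> S \<and> plen q < n then f q * ((if pend G q = w then 1 else 0) - (if fst q = w then 1 else 0)) else 0 :: 'k::field)"
proof -
  have "(\<Sum>s\<in>S. f s * inner_der G n s (vert_idem w) q) =
    (\<Sum>s\<in>S. if q = s then (if plen q < n then f q * ((if pend G q = w then 1 else 0) - (if fst q = w then 1 else 0)) else 0) else 0)"
    by (rule sum.cong) (auto simp: inner_der_vert_idem)
  then show ?thesis using assms by simp
qed

lemma trunc_der_vert_idem_coeff:
  fixes d :: "(('v,'e) path \<Rightarrow> 'k::field) \<Rightarrow> _"
  assumes fq: "finite_quiver G" and d: "trunc_der G n d" and w: "w \<in> verts G"
    and q: "is_path G q" "pend G q \<noteq> fst q"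
  shows "d (vert_idem w) q =
    d (vert_idem (pend G q)) q * ((if pend G q = w then 1 else 0) - (if fst q = w then 1 else 0))"
proof -
  have h: "pend G q \<in> verts G" using fq q(1) by (rule pend_verts)
  consider "pend G q = w" | "fst q = w" "pend G q \<noteq> w" | "fst q \<noteq> w" "pend G q \<noteq> w" by blast
  then show ?thesis
  proof cases
    case 1 then show ?thesis using q(2) by simp
  next
    case 2
    then have "d (vert_idem w) q = - d (vert_idem (pend G q)) q"
      using trunc_der_vert_idem_pair[OF d w h, of q] by (simp add: eq_neg_iff_add_eq_0)
    then show ?thesis using 2 by simp
  next
    case 3
    have "d (vert_idem w) q = 0"
    proof (rule ccontr)
      assume "d (vert_idem w) q \<noteq> 0"
      then show False using trunc_der_vert_idem_support[OF d w, of q] 3 by simp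
    qed
    then show ?thesis using 3 by simp
  qed
qed

lemma trunc_der_vert_idem_expansion:
  fixes d :: "(('v,'e) path \<Rightarrow> 'k::field) \<Rightarrow> _"
  assumes fq: "finite_quiver G" and d: "trunc_der G n d" and w: "w \<in> verts G"
  shows "d (vert_idem w) =
    (\<lambda>q. \<Sum>s\<in>nonclosed_paths G n. d (vert_idem (pend G s)) s * inner_der G n s (vert_idem w) q)"
proof
  fix q
  have e: "vert_idem w \<in> PA G" using w by (rule vert_idem_PA)
  have rhs: "(\<Sum>s\<in>nonclosed_paths G n. d (vert_idem (pend G s)) s * inner_der G n s (vert_idem w) q) =
    (if q \<in> nonclosed_paths G n \<and> plen q < n then d (vert_idem (pend G q)) q *
      ((if pend G q = w then 1 else 0) - (if fst q = w then 1 else 0)) else 0)"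
    by (rule sum_inner_der_vert_idem[OF finite_nonclosed_paths[OF fq]])
  show "d (vert_idem w) q = (\<Sum>s\<in>nonclosed_paths G n. d (vert_idem (pend G s)) s * inner_der G n s (vert_idem w) q)"
  proof (cases "q \<in> nonclosed_paths G n")
    case True
    then show ?thesis using trunc_der_vert_idem_coeff[OF fq d w, of q] rhs by (simp add: nonclosed_paths_def)
  next
    case False
    have "d (vert_idem w) q = 0"
    proof (rule ccontr)
      assume nz: "d (vert_idem w) q \<noteq> 0"
      have "plen q < n" using trunc_der_long_path[OF d e, of q] nz by (meson not_le)
      then show False using False trunc_der_path[OF d e nz] trunc_der_vert_idem_support[OF d w nz]
        by (auto simp: nonclosed_paths_def)
    qed
    then show ?thesis using False rhs by simp
  qed
qed

text \<open>d(b) is supported on paths parallel to b, of length \<ge> 1 by the loop lemma.\<close>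
lemma trunc_der_arc_expansion:
  fixes d :: "(('v,'e) path \<Rightarrow> 'k::field_char_0) \<Rightarrow> _"
  assumes fq: "finite_quiver G" and n: "1 \<le> n" and d: "trunc_der G n d"
    and dv: "\<And>v. v \<in> verts G \<Longrightarrow> d (vert_idem v) = (\<lambda>_. 0)" and b: "b \<in> arcs G"
  shows "d (bas (apath G b)) =
    (\<lambda>q. \<Sum>(a, p)\<in>parallel_pairs G n. d (bas (apath G a)) p * Drs_trunc G n a p (bas (apath G b)) q)"
proof
  fix q
  let ?rhs = "\<Sum>(a, p)\<in>parallel_pairs G n. d (bas (apath G a)) p * Drs_trunc G n a p (bas (apath G b)) q"
  have "?rhs = (\<Sum>i\<in>parallel_pairs G n. if i = (b, q) then d (bas (apath G b)) q else 0)"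
  proof (rule sum.cong[OF refl], clarify)
    fix a p assume i: "(a, p) \<in> parallel_pairs G n"
    then have eq: "Drs_trunc G n a p (bas (apath G b)) = (if b = a then bas p else (\<lambda>_. 0))"
      by (intro parallel_arc.Drs_trunc_arc parallel_pairs_parallel_arc[OF fq]) (auto simp: parallel_pairs_def)
    show "d (bas (apath G a)) p * Drs_trunc G n a p (bas (apath G b)) q =
        (if (a, p) = (b, q) then d (bas (apath G b)) q else 0)"
      unfolding eq by (auto simp: bas_def)
  qed
  also have "\<dots> = d (bas (apath G b)) q"
  proof (cases "d (bas (apath G b)) q = 0")
    case False
    have bP: "bas (apath G b) \<in> PA G"
      by (rule bas_PA[OF apath_is_path[OF fq b]])
    have par: "fst q = qsrc G b \<and> pend G q = qtgt G b" by (rule trunc_der_arc_support[OF fq d dv b False])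
    have "1 \<le> plen q"
    proof (rule ccontr)
      assume "\<not> 1 \<le> plen q"
      then obtain v where "q = (v, [])" by (cases q) (auto simp: plen_def Suc_le_eq)
      then have "q = (qsrc G b, [])" "qsrc G b = qtgt G b" using par by (auto simp: pend_def)
      then show False using trunc_der_loop_vertex_coeff[OF fq d n b refl] False by (simp add: apath_def)
    qed
    moreover have "plen q < n" using trunc_der_long_path[OF d bP, of q] False by (meson not_le)
    ultimately have "(b, q) \<in> parallel_pairs G n"
      using b par trunc_der_path[OF d bP False] by (simp add: parallel_pairs_def parallel_def pstart_def)
    then show ?thesis using finite_parallel_pairs[OF fq] by simp
  qed (auto intro: sum.neutral)
  finally show "d (bas (apath G b)) q = ?rhs" by (rule sym)
qed

lemma trunc_der_expansion:
  fixes d :: "(('v,'e) path \<Rightarrow> 'k::field_char_0) \<Rightarrow> _"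
  assumes fq: "finite_quiver G" and n: "1 \<le> n" and d: "trunc_der G n d"
  shows "\<exists>\<alpha> \<beta>. \<forall>x\<in>PA G. d x = (\<lambda>q. (\<Sum>s\<in>nonclosed_paths G n. \<alpha> s * inner_der G n s x q) +
                               (\<Sum>(a, p)\<in>parallel_pairs G n. \<beta> a p * Drs_trunc G n a p x q))"
proof (intro exI ballI)
  let ?NC = "nonclosed_paths G n" and ?PP = "parallel_pairs G n"
  define \<alpha> where "\<alpha> s = d (vert_idem (pend G s)) s" for s
  define d1 where "d1 x q = d x q - (\<Sum>s\<in>?NC. \<alpha> s * inner_der G n s x q)" for x q
  define \<beta> where "\<beta> a p = d1 (bas (apath G a)) p" for a p
  define d2 where "d2 x q = d1 x q - (\<Sum>(a, p)\<in>?PP. \<beta> a p * Drs_trunc G n a p x q)" for x q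
  have d1: "trunc_der G n d1"
    unfolding d1_def[abs_def] using finite_nonclosed_paths[OF fq]
    by (intro trunc_der_diff d trunc_der_lincomb trunc_der_inner_der) (auto simp: nonclosed_paths_def)
  have d1v: "d1 (vert_idem v) = (\<lambda>_. 0)" if "v \<in> verts G" for v
    using trunc_der_vert_idem_expansion[OF fq d that] by (simp add: d1_def \<alpha>_def fun_eq_iff)
  have "trunc_der G n (\<lambda>x q. \<Sum>i\<in>?PP. \<beta> (fst i) (snd i) * Drs_trunc G n (fst i) (snd i) x q)"
    by (rule trunc_der_lincomb[OF finite_parallel_pairs[OF fq]])
       (auto intro!: parallel_arc.trunc_der_Drs_trunc parallel_pairs_parallel_arc[OF fq])
  then have pairs: "trunc_der G n (\<lambda>x q. \<Sum>(a, p)\<in>?PP. \<beta> a p * Drs_trunc G n a p x q)"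
    by (simp add: case_prod_beta')
  have d2: "trunc_der G n d2" unfolding d2_def[abs_def] by (rule trunc_der_diff[OF d1 pairs])
  have "d2 (vert_idem v) = (\<lambda>_. 0)" if "v \<in> verts G" for v
  proof
    fix q
    have "(\<Sum>(a, p)\<in>?PP. \<beta> a p * Drs_trunc G n a p (vert_idem v) q) = 0"
      by (intro sum.neutral ballI)
         (simp add: case_prod_unfold parallel_arc.Drs_trunc_vert_idem[OF parallel_pairs_parallel_arc[OF fq]])
    then show "d2 (vert_idem v) q = 0" using d1v[OF that] by (simp add: d2_def)
  qed
  moreover have "d2 (bas (apath G b)) = (\<lambda>_. 0)" if "b \<in> arcs G" for b
    using trunc_der_arc_expansion[OF fq n d1 d1v that] by (simp add: d2_def \<beta>_def fun_eq_iff)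
  moreover fix x :: "_ \<Rightarrow> 'k" assume "x \<in> PA G"
  ultimately have "d2 x = (\<lambda>_. 0)" by (rule trunc_der_eq_zero_on_generators[OF fq d2])
  then show "d x = (\<lambda>q. (\<Sum>s\<in>?NC. \<alpha> s * inner_der G n s x q) + (\<Sum>(a, p)\<in>?PP. \<beta> a p * Drs_trunc G n a p x q))"
    by (simp add: d2_def d1_def fun_eq_iff diff_eq_eq add.commute)
qed

lemma Diff_lincomb_of_canon:
  fixes \<delta> :: "('v,'e,'k::field) qelem \<Rightarrow> ('v,'e,'k) qelem"
    and F :: "'i \<Rightarrow> ('v,'e,'k) qelem \<Rightarrow> ('v,'e,'k) qelem"
  assumes fq: "finite_quiver G" and I: "finite I" and FB: "F ` I \<subseteq> B" and B: "B \<subseteq> Diff G n"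
    and \<delta>: "\<And>X. X \<in> QA G n \<Longrightarrow> \<delta> X \<in> QA G n"
    and eq: "\<And>X. X \<in> QA G n \<Longrightarrow> canon n (\<delta> X) = (\<lambda>p. \<Sum>i\<in>I. a i * canon n (F i X) p)"
  shows "\<exists>S c. finite S \<and> S \<subseteq> B \<and> (\<forall>X\<in>QA G n. \<delta> X = qsum G n S (\<lambda>D. qsmul G n (c D) (D X)))"
proof (intro exI conjI ballI)
  define c where "c D = (\<Sum>i\<in>{i\<in>I. F i = D}. a i)" for D
  have F: "F ` I \<subseteq> Diff G n" using FB B by (rule order_trans)
  show "finite (F ` I)" "F ` I \<subseteq> B" using I FB by auto
  fix X :: "('v,'e,'k) qelem" assume X: "X \<in> QA G n"
  show "\<delta> X = qsum G n (F ` I) (\<lambda>D. qsmul G n (c D) (D X))"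
  proof (rule QA_eqI[OF fq \<delta>[OF X] lincomb_QA[OF fq _ F X]])
    have "(\<Sum>D\<in>F ` I. c D * canon n (D X) p) =
        (\<Sum>D\<in>F ` I. \<Sum>i\<in>{i\<in>I. F i = D}. a i * canon n (F i X) p)" for p
      unfolding c_def sum_distrib_right by (intro sum.cong refl) auto
    also have "\<dots> p = (\<Sum>i\<in>I. a i * canon n (F i X) p)" for p
      by (rule sum.image_gen[symmetric, OF I])
    finally have "(\<Sum>D\<in>F ` I. c D * canon n (D X) p) = (\<Sum>i\<in>I. a i * canon n (F i X) p)" for p .
    then show "canon n (\<delta> X) = canon n (qsum G n (F ` I) (\<lambda>D. qsmul G n (c D) (D X)))"
      using canon_lincomb[OF fq _ F X] eq[OF X] I by simp
  qed (use I in simp)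
qed

lemma Diff_spanned:
  fixes \<delta> :: "('v,'e,'k::field_char_0) qelem \<Rightarrow> ('v,'e,'k) qelem"
  assumes fq: "finite_quiver G" and n: "1 \<le> n" and D: "\<delta> \<in> Diff G n"
  shows "\<exists>S c. finite S \<and> S \<subseteq> B1 G n \<union> B2 G n \<and>
            (\<forall>X\<in>QA G n. \<delta> X = qsum G n S (\<lambda>D. qsmul G n (c D) (D X)))"
proof -
  let ?NC = "nonclosed_paths G n" and ?PP = "parallel_pairs G n"
  obtain \<alpha> \<beta> where exp: "\<forall>x\<in>PA G. canon n (\<delta> (coset G n x)) =
      (\<lambda>q. (\<Sum>s\<in>?NC. \<alpha> s * inner_der G n s x q) + (\<Sum>(a, p)\<in>?PP. \<beta> a p * Drs_trunc G n a p x q))"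
    using trunc_der_expansion[OF fq n Diff_imp_trunc_der[OF fq D]] by blast
  define F :: "_ \<Rightarrow> ('v,'e,'k) qelem \<Rightarrow> ('v,'e,'k) qelem" where
    "F i = (case i of Inl s \<Rightarrow> Dinner G n (coset G n (bas s)) | Inr (a, p) \<Rightarrow> Drs_bar G n a p)" for i
  define co where "co i = (case i of Inl s \<Rightarrow> \<alpha> s | Inr (a, p) \<Rightarrow> \<beta> a p)" for i
  have fin: "finite ?NC" "finite ?PP" using finite_nonclosed_paths[OF fq] finite_parallel_pairs[OF fq] .
  have FB: "F ` (?NC <+> ?PP) \<subseteq> B1 G n \<union> B2 G n"
    by (auto simp: F_def B1_eq_image[OF n] B2_eq_image)
  show ?thesis
  proof (rule Diff_lincomb_of_canon[OF fq _ FB B1_B2_Diff[OF fq n] Diff_QA[OF D]])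
    show "finite (?NC <+> ?PP)" using fin by simp
    fix X :: "('v,'e,'k) qelem" assume X: "X \<in> QA G n"
    have "canon n (\<delta> X) = canon n (\<delta> (coset G n (canon n X)))" by (simp add: coset_canon[OF fq X])
    also have "\<dots> = (\<lambda>q. (\<Sum>s\<in>?NC. \<alpha> s * inner_der G n s (canon n X) q) +
        (\<Sum>(a, p)\<in>?PP. \<beta> a p * Drs_trunc G n a p (canon n X) q))"
      using exp canon_PA[OF fq X] by simp
    also have "\<dots> = (\<lambda>q. (\<Sum>s\<in>?NC. \<alpha> s * canon n (Dinner G n (coset G n (bas s)) X) q) +
        (\<Sum>(a, p)\<in>?PP. \<beta> a p * canon n (Drs_bar G n a p X) q))"
      by (intro ext arg_cong2[where f = "(+)"] sum.cong refl)
         (auto simp: nonclosed_paths_def canon_Dinner_bas[OF fq _ _ X]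
           parallel_arc.canon_Drs_bar[OF parallel_pairs_parallel_arc[OF fq] X])
    also have "\<dots> = (\<lambda>q. \<Sum>i\<in>?NC <+> ?PP. co i * canon n (F i X) q)"
      using fin by (simp add: sum.Plus F_def co_def case_prod_unfold)
    finally show "canon n (\<delta> X) = (\<lambda>q. \<Sum>i\<in>?NC <+> ?PP. co i * canon n (F i X) q)" .
  qed
qed

subsection \<open>Linear independence\<close>

lemma coeff_eq_zero_by_dual:
  fixes c f :: "'a \<Rightarrow> 'k::comm_ring_1"
  assumes "finite S" "D \<in> S" "(\<Sum>E\<in>S. c E * f E) = 0" "f D = 1"
    and "\<And>E. E \<in> S \<Longrightarrow> E \<noteq> D \<Longrightarrow> c E * f E = 0"
  shows "c D = 0"
proof -
  have "(\<Sum>E\<in>S. c E * f E) = c D * f D + (\<Sum>E\<in>S - {D}. c E * f E)"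
    using assms(1,2) by (rule sum.remove)
  then show ?thesis using assms(3-5) by simp
qed

lemma canon_Dinner_at_vert_idem:
  assumes fq: "finite_quiver G" and s: "is_path G s" "plen s < n" and s0: "s0 \<in> nonclosed_paths G n"
  shows "canon n (Dinner G n (coset G n (bas s)) (coset G n (vert_idem (pend G s0)))) s0 =
    (if s = s0 then 1 else 0 :: 'k::field)"
proof -
  have w: "pend G s0 \<in> verts G" using s0 fq by (auto simp: nonclosed_paths_def intro: pend_verts)
  have canonX: "canon n (coset G n (vert_idem (pend G s0) :: _ \<Rightarrow> 'k)) = vert_idem (pend G s0)"
    using w s0 by (simp add: canon_coset[OF fq] vert_idem_PA trunc_bas_short plen_def nonclosed_paths_def)
  have X: "coset G n (vert_idem (pend G s0) :: _ \<Rightarrow> 'k) \<in> QA G n" using w by (intro coset_QA vert_idem_PA)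
  have "canon n (Dinner G n (coset G n (bas s)) (coset G n (vert_idem (pend G s0)))) =
      (inner_der G n s (vert_idem (pend G s0)) :: _ \<Rightarrow> 'k)"
    using canon_Dinner_bas[OF fq s X] unfolding canonX .
  then show ?thesis using s0 by (auto simp: inner_der_vert_idem nonclosed_paths_def)
qed

lemma canon_Drs_bar_at_vert_idem:
  assumes fq: "finite_quiver G" and n: "1 \<le> n" and as: "(a, s) \<in> parallel_pairs G n" and w: "w \<in> verts G"
  shows "canon n (Drs_bar G n a s (coset G n (vert_idem w))) = (\<lambda>_. 0 :: 'k::field)"
proof -
  note pa = parallel_pairs_parallel_arc[OF fq as]
  have canonX: "canon n (coset G n (vert_idem w :: _ \<Rightarrow> 'k)) = vert_idem w"
    using w n by (simp add: canon_coset[OF fq] vert_idem_PA trunc_bas_short plen_def)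
  have X: "coset G n (vert_idem w :: _ \<Rightarrow> 'k) \<in> QA G n" using w by (intro coset_QA vert_idem_PA)
  have "canon n (Drs_bar G n a s (coset G n (vert_idem w))) = (Drs_trunc G n a s (vert_idem w) :: _ \<Rightarrow> 'k)"
    using parallel_arc.canon_Drs_bar[OF pa X] unfolding canonX .
  also have "\<dots> = (\<lambda>_. 0)" by (rule parallel_arc.Drs_trunc_vert_idem[OF pa])
  finally show ?thesis .
qed

lemma canon_Drs_bar_at_arc:
  assumes fq: "finite_quiver G" and n: "2 \<le> n" and as: "(a, s) \<in> parallel_pairs G n" and r0: "r0 \<in> arcs G"
  shows "canon n (Drs_bar G n a s (coset G n (bas (apath G r0)))) s0 =
    (if a = r0 \<and> s = s0 then 1 else 0 :: 'k::field)"
proof -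
  note pa = parallel_pairs_parallel_arc[OF fq as]
  have rP: "is_path G (apath G r0)" by (rule apath_is_path[OF fq r0])
  have canonX: "canon n (coset G n (bas (apath G r0) :: _ \<Rightarrow> 'k)) = bas (apath G r0)"
    using rP n by (simp add: canon_coset[OF fq] bas_PA trunc_bas_short plen_def apath_def)
  have X: "coset G n (bas (apath G r0) :: _ \<Rightarrow> 'k) \<in> QA G n" using rP by (intro coset_QA bas_PA)
  have "canon n (Drs_bar G n a s (coset G n (bas (apath G r0)))) = (Drs_trunc G n a s (bas (apath G r0)) :: _ \<Rightarrow> 'k)"
    using parallel_arc.canon_Drs_bar[OF pa X] unfolding canonX .
  also have "\<dots> = (if r0 = a then bas s else (\<lambda>_. 0))"
    using as by (intro parallel_arc.Drs_trunc_arc[OF pa]) (simp add: parallel_pairs_def)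
  finally show ?thesis by (auto simp: bas_def)
qed

lemma canon_lincomb_eq_zero:
  fixes S :: "(('v,'e,'k::field) qelem \<Rightarrow> ('v,'e,'k) qelem) set"
  assumes fq: "finite_quiver G" and S: "finite S" "S \<subseteq> Diff G n" and X: "X \<in> QA G n"
    and Z: "qsum G n S (\<lambda>D. qsmul G n (c D) (D X)) = qzero G n"
  shows "(\<Sum>D\<in>S. c D * canon n (D X) p) = 0"
proof -
  have "(\<lambda>p. \<Sum>D\<in>S. c D * canon n (D X) p) = (\<lambda>_. 0)"
    using Z canon_lincomb[OF fq S X, of c] by (simp add: canon_qzero[OF fq])
  then have "(\<lambda>p. \<Sum>D\<in>S. c D * canon n (D X) p) p = (\<lambda>_. 0) p" by (rule fun_cong)
  then show ?thesis by simp
qed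

text \<open>The B1-coefficients are read off at the vertices e_{h(s)}, where all of B2 vanishes.\<close>
lemma lincomb_B1_coeff_zero:
  fixes S :: "(('v,'e,'k::field) qelem \<Rightarrow> ('v,'e,'k) qelem) set"
  assumes fq: "finite_quiver G" and n: "1 \<le> n" and S: "finite S" "S \<subseteq> B1 G n \<union> B2 G n"
    and Z: "\<And>X p. X \<in> QA G n \<Longrightarrow> (\<Sum>D\<in>S. c D * canon n (D X) p) = 0"
    and D: "D \<in> S" "D \<in> B1 G n"
  shows "c D = 0"
proof -
  note B1 = B1_eq_image[OF n]
  obtain s0 where s0: "s0 \<in> nonclosed_paths G n" "D = Dinner G n (coset G n (bas s0))"
    using D(2) unfolding B1 by blast
  let ?X = "coset G n (vert_idem (pend G s0) :: _ \<Rightarrow> 'k)"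
  have w: "pend G s0 \<in> verts G" using s0 fq by (auto simp: nonclosed_paths_def intro: pend_verts)
  then have X: "?X \<in> QA G n" by (intro coset_QA vert_idem_PA)
  show ?thesis
  proof (rule coeff_eq_zero_by_dual[OF S(1) D(1) Z[OF X]])
    show "canon n (D ?X) s0 = 1" using canon_Dinner_at_vert_idem[OF fq _ _ s0(1), where 'k='k] s0
      by (simp add: nonclosed_paths_def)
    fix E assume E: "E \<in> S" "E \<noteq> D"
    show "c E * canon n (E ?X) s0 = 0"
    proof (cases "E \<in> B1 G n")
      case True
      then obtain s where s: "s \<in> nonclosed_paths G n" "E = Dinner G n (coset G n (bas s))"
        unfolding B1 by blast
      then have "s \<noteq> s0" using E(2) s0(2) by blast
      then show ?thesis using canon_Dinner_at_vert_idem[OF fq _ _ s0(1), of s, where 'k='k] s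
        by (simp add: nonclosed_paths_def)
    next
      case False
      then have "E \<in> B2 G n" using E(1) S(2) by blast
      then show ?thesis by (rule B2_memE) (simp add: canon_Drs_bar_at_vert_idem[OF fq n _ w])
    qed
  qed
qed

text \<open>Once the B1-coefficients vanish, the B2-coefficients are read off at the arrows.\<close>
lemma lincomb_B2_coeff_zero:
  fixes S :: "(('v,'e,'k::field) qelem \<Rightarrow> ('v,'e,'k) qelem) set"
  assumes fq: "finite_quiver G" and n: "2 \<le> n" and S: "finite S" "S \<subseteq> B1 G n \<union> B2 G n"
    and Z: "\<And>X p. X \<in> QA G n \<Longrightarrow> (\<Sum>D\<in>S. c D * canon n (D X) p) = 0"
    and c_B1: "\<And>E. E \<in> S \<Longrightarrow> E \<in> B1 G n \<Longrightarrow> c E = 0"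
    and D: "D \<in> S" "D \<in> B2 G n"
  shows "c D = 0"
proof -
  obtain r0 s0 where rs: "(r0, s0) \<in> parallel_pairs G n" "D = Drs_bar G n r0 s0"
    using D(2) by (rule B2_memE)
  have r0: "r0 \<in> arcs G" using rs by (simp add: parallel_pairs_def)
  let ?X = "coset G n (bas (apath G r0) :: _ \<Rightarrow> 'k)"
  have X: "?X \<in> QA G n" by (intro coset_QA bas_PA apath_is_path[OF fq r0])
  show ?thesis
  proof (rule coeff_eq_zero_by_dual[OF S(1) D(1) Z[OF X]])
    show "canon n (D ?X) s0 = 1" using canon_Drs_bar_at_arc[OF fq n rs(1) r0, where 'k='k] rs(2) by simp
    fix E assume E: "E \<in> S" "E \<noteq> D"
    show "c E * canon n (E ?X) s0 = 0"
    proof (cases "E \<in> B1 G n")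
      case False
      then have "E \<in> B2 G n" using E(1) S(2) by blast
      then obtain a s where as: "(a, s) \<in> parallel_pairs G n" "E = Drs_bar G n a s" by (rule B2_memE)
      then have "(a, s) \<noteq> (r0, s0)" using E(2) rs(2) by blast
      then show ?thesis using canon_Drs_bar_at_arc[OF fq n as(1) r0, where 'k='k, of s0] as(2) by auto
    qed (use c_B1 E in simp)
  qed
qed

lemma B1_B2_independent:
  fixes S :: "(('v,'e,'k::field) qelem \<Rightarrow> ('v,'e,'k) qelem) set"
  assumes fq: "finite_quiver G" and n: "2 \<le> n" and S: "finite S" "S \<subseteq> B1 G n \<union> B2 G n"
    and Z: "\<forall>X\<in>QA G n. qsum G n S (\<lambda>D. qsmul G n (c D) (D X)) = qzero G n"
    and D: "D \<in> S"
  shows "c D = 0"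
proof -
  have n1: "1 \<le> n" using n by simp
  have SD: "S \<subseteq> Diff G n" using S(2) B1_B2_Diff[OF fq n1] by (rule order_trans)
  have Z': "(\<Sum>D\<in>S. c D * canon n (D X) p) = 0" if "X \<in> QA G n" for X p
    using canon_lincomb_eq_zero[OF fq S(1) SD that Z[rule_format, OF that]] .
  have c_B1: "c E = 0" if "E \<in> S" "E \<in> B1 G n" for E
    by (rule lincomb_B1_coeff_zero[OF fq n1 S Z' that])
  have c_B2: "c E = 0" if "E \<in> S" "E \<in> B2 G n" for E
    by (rule lincomb_B2_coeff_zero[OF fq n S Z' c_B1 that])
  show ?thesis using D S(2) c_B1 c_B2 by blast
qed

theorem proposition4p8:
  fixes G :: "('v,'e) quiver" and n :: nat
  assumes "finite_quiver G" and "connected_quiver G" and "n \<ge> 2"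
  shows "(\<forall>r s. r \<in> arcs G \<and> is_path G s \<and> plen s \<le> n - 1 \<and> 1 \<le> plen s \<and> parallel G r s
             \<longrightarrow> (\<forall>x \<in> (knG G n :: (('v,'e) path \<Rightarrow> 'k::field_char_0) set).
                    Drs G n r s x = qzero G n))
         \<and> is_Diff_basis G n (B1 G n \<union> (B2 G n :: (('v,'e,'k) qelem \<Rightarrow> ('v,'e,'k) qelem) set))"
proof (intro conjI allI impI ballI)
  note fq = assms(1) and n = assms(3)
  fix r s and x :: "_ \<Rightarrow> 'k"
  assume "r \<in> arcs G \<and> is_path G s \<and> plen s \<le> n - 1 \<and> 1 \<le> plen s \<and> parallel G r s"
  then show "x \<in> knG G n \<Longrightarrow> Drs G n r s x = qzero G n"
    by (intro parallel_arc.Drs_vanishes_on_knG parallel_arc.intro[OF fq]) auto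
next
  note fq = assms(1) and n = assms(3)
  then have n1: "1 \<le> n" by simp
  show "is_Diff_basis G n (B1 G n \<union> (B2 G n :: (('v,'e,'k) qelem \<Rightarrow> ('v,'e,'k) qelem) set))"
    by (rule is_Diff_basisI B1_B2_Diff[OF fq n1] Diff_spanned[OF fq n1] B1_B2_independent[OF fq n]
        | assumption)+
qed

end
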